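(* Let $A$ be a finite action set, $a^*\in A$, and let $A^-$ be a nonempty proper subset of $A$. Let $\mu$ and $\mu'$ be two monitoring technologies with $\min_{a\in A^-}\mathrm{KL}(\mu_a,\mu_{a^*})>\min_{a\in A^-}\mathrm{KL}(\mu'_a,\mu'_{a^*})$. Then for any $\underline w$, $u$ and $c$ satisfying the standing assumptions with $A^-(c,a^* )=A^-$, there exists $N$ such that for all $n\ge N$, $$C^{\mathrm{SB}}_n(\mu,u,c,a^* )\le C^{\mathrm{bin}}_n(\mu,u,c,a^* )<C^{\mathrm{SB}}_n(\mu',u,c,a^* ).$$
   Context: A monitoring technology $\mu=(\mu_a)_{a\in A}$ consists of Borel probability measures on a signal space $X$ (a subset of a Euclidean space) with $\mu_a\neq\mu_{a'}$ for $a\neq a'$, $\mu_{a'}\ll\mu_a$ for all $a,a'$, and $\int(\frac{d\mu_{a'}}{d\mu_a})^\lambda d\mu_a<\infty$ for all $\lambda>0$. Under action $a$ the principal observes $x^n$, $n$ i.i.d. draws from $\mu_a$, with expectation $\mathbb{E}_a$. Standing assumptions: $\underline w\in\mathbb{R}$, $u:[\underline w,\infty)\to\mathbb{R}$ is $C^2$ with $u'>0$, $u''<0$, $\lim_{w\to\infty}u'(w)=0$; $c:A\to\mathbb{R}$ with $c(A)\subseteq\mathrm{int}\,u([\underline w,\infty))$, $c(a^* )>c(a)$ for some $a$ and $c(a^* )\neq c(a)$ for all $a\neq a^*$. Outside option is $0$. A contract $w:X^n\to[\underline w,\infty)$ satisfies (IC) if $\mathbb{E}_{a^*}[u(w)]-c(a^*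 )\ge\mathbb{E}_a[u(w)]-c(a)$ for all $a\in A$ and (IR) if $\mathbb{E}_{a^*}[u(w)]-c(a^* )\ge0$. $C^{\mathrm{SB}}_n(\mu,u,c,a^* )$ is the infimum of $\mathbb{E}_{a^*}[w(x^n)]$ over contracts satisfying (IC),(IR) (signals from $\mu$); $C^{\mathrm{bin}}_n$ is the same restricted to contracts with $|w(X^n)|=2$. $A^-(c,a^* )=\{a:c(a)<c(a^* )\}$. $\mathrm{KL}(\nu,\nu')=\int\log\frac{d\nu}{d\nu'}d\nu$ if $\nu\ll\nu'$, else $\infty$. *)

theory Defs
  imports "HOL-Probability.Probability"
begin

text \<open>Monitoring technology on signal space X (subset of a Euclidean space) for action set A.
  RN_deriv M N is the density dN/dM.\<close>
definition monitoring_tech :: "'x::euclidean_space set \<Rightarrow> 'a set \<Rightarrow> ('a \<Rightarrow> 'x measure) \<Rightarrow> bool" where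
  "monitoring_tech X A \<mu> \<longleftrightarrow>
     (\<forall>a\<in>A. prob_space (\<mu> a) \<and> sets (\<mu> a) = sets (restrict_space borel X)) \<and>
     (\<forall>a\<in>A. \<forall>a'\<in>A. a \<noteq> a' \<longrightarrow> \<mu> a \<noteq> \<mu> a') \<and>
     (\<forall>a\<in>A. \<forall>a'\<in>A. absolutely_continuous (\<mu> a) (\<mu> a')) \<and>
     (\<forall>a\<in>A. \<forall>a'\<in>A. \<forall>l::real. l > 0 \<longrightarrow>
        (\<integral>\<^sup>+ x. ennreal (enn2real (RN_deriv (\<mu> a) (\<mu> a') x) powr l) \<partial>(\<mu> a)) < \<infinity>)"

definition KL :: "'x measure \<Rightarrow> 'x measure \<Rightarrow> ereal" where
  "KL \<nu> \<nu>' = (if absolutely_continuous \<nu>' \<nu> then ereal (KL_divergence (exp 1) \<nu>' \<nu>) else \<infinity>)"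

definition standing_assms :: "real \<Rightarrow> (real \<Rightarrow> real) \<Rightarrow> ('a \<Rightarrow> real) \<Rightarrow> 'a set \<Rightarrow> 'a \<Rightarrow> bool" where
  "standing_assms wl u c A astar \<longleftrightarrow>
     (\<exists>u1 u2. (\<forall>w\<ge>wl. (u has_real_derivative u1 w) (at w within {wl..}) \<and>
                        (u1 has_real_derivative u2 w) (at w within {wl..}) \<and>
                        u1 w > 0 \<and> u2 w < 0) \<and>
              continuous_on {wl..} u2 \<and> (u1 \<longlongrightarrow> 0) at_top) \<and>
     c ` A \<subseteq> interior (u ` {wl..}) \<and>
     (\<exists>a\<in>A. c astar > c a) \<and>
     (\<forall>a\<in>A. a \<noteq> astar \<longrightarrow> c a \<noteq> c astar)"

definition Aminus :: "('a \<Rightarrow> real) \<Rightarrow> 'a set \<Rightarrow> 'a \<Rightarrow> 'a set" where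
  "Aminus c A astar = {a\<in>A. c a < c astar}"

definition iid :: "('a \<Rightarrow> 'x measure) \<Rightarrow> 'a \<Rightarrow> nat \<Rightarrow> (nat \<Rightarrow> 'x) measure" where
  "iid \<mu> a n = PiM {..<n} (\<lambda>_. \<mu> a)"

text \<open>Admissible contract: measurable, values in [wl, inf), satisfies (IC) and (IR).
  Integrability of u(w) under every action is no loss (u(w) is bounded below, so
  a non-integrable u(w) has expectation +inf and violates IC); integrability of w
  under astar is no loss (otherwise the cost is +inf).\<close>
definition contract_ok :: "real \<Rightarrow> (real \<Rightarrow> real) \<Rightarrow> ('a \<Rightarrow> real) \<Rightarrow> 'a set \<Rightarrow> 'a \<Rightarrow>
    ('a \<Rightarrow> 'x measure) \<Rightarrow> nat \<Rightarrow> ((nat \<Rightarrow> 'x) \<Rightarrow> real) \<Rightarrow> bool" where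
  "contract_ok wl u c A astar \<mu> n w \<longleftrightarrow>
     w \<in> borel_measurable (iid \<mu> astar n) \<and>
     (\<forall>x\<in>space (iid \<mu> astar n). w x \<ge> wl) \<and>
     integrable (iid \<mu> astar n) w \<and>
     (\<forall>a\<in>A. integrable (iid \<mu> a n) (\<lambda>x. u (w x))) \<and>
     (\<forall>a\<in>A. (\<integral>x. u (w x) \<partial>iid \<mu> astar n) - c astar \<ge> (\<integral>x. u (w x) \<partial>iid \<mu> a n) - c a) \<and>
     (\<integral>x. u (w x) \<partial>iid \<mu> astar n) - c astar \<ge> 0"

definition C_SB :: "real \<Rightarrow> (real \<Rightarrow> real) \<Rightarrow> ('a \<Rightarrow> real) \<Rightarrow> 'a set \<Rightarrow> 'a \<Rightarrow>
    ('a \<Rightarrow> 'x measure) \<Rightarrow> nat \<Rightarrow> ereal" where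
  "C_SB wl u c A astar \<mu> n =
     Inf {ereal (\<integral>x. w x \<partial>iid \<mu> astar n) | w. contract_ok wl u c A astar \<mu> n w}"

definition C_bin :: "real \<Rightarrow> (real \<Rightarrow> real) \<Rightarrow> ('a \<Rightarrow> real) \<Rightarrow> 'a set \<Rightarrow> 'a \<Rightarrow>
    ('a \<Rightarrow> 'x measure) \<Rightarrow> nat \<Rightarrow> ereal" where
  "C_bin wl u c A astar \<mu> n =
     Inf {ereal (\<integral>x. w x \<partial>iid \<mu> astar n) | w. contract_ok wl u c A astar \<mu> n w \<and>
            card (w ` space (iid \<mu> astar n)) = 2}"

end

theory Submission
  imports Defs "HOL-Real_Asymp.Real_Asymp"
begin

text \<open>With \<open>w\<^sub>0 = u\<inverse>(c a\<^sup>*)\<close> the first-best wage, both costs are \<open>w\<^sub>0\<close> plus an exponentially small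
  premium, and the exponent is governed by the smallest KL divergence. Under \<open>\<mu>\<close> a bonus paid when
  every likelihood ratio \<open>d\<mu>\<^sub>a\<^sup>n / d\<mu>\<^sub>a\<^sub>*\<^sup>n\<close> of a cheaper action \<open>a\<close> stays below \<open>e\<^sup>\<tau>\<^sup>n\<close> is incentive
  compatible at premium \<open>O(e\<^sup>-\<^sup>\<tau>\<^sup>n)\<close> for every \<open>\<tau> < min\<^sub>a KL(\<mu>\<^sub>a, \<mu>\<^sub>a\<^sub>*)\<close>: Markov's inequality controls
  the event under \<open>a\<^sup>*\<close>, a Renyi moment of order below one controls it under \<open>a\<close>. Under \<open>\<mu>'\<close>, for
  the action \<open>a'\<close> of least divergence, incentive compatibility forces a utility shortfall under \<open>a'\<close>;
  a change of measure with a Renyi moment of order above one turns it into a spread of wages below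
  \<open>w\<^sub>0\<close> under \<open>a\<^sup>*\<close>, which strong concavity of \<open>u\<close> prices at \<open>e\<^sup>-\<^sup>s\<^sup>n\<close> for every \<open>s > KL(\<mu>'\<^sub>a\<^sub>', \<mu>'\<^sub>a\<^sub>*)\<close>.
  Both Renyi bounds come from the derivative of \<open>\<alpha> \<mapsto> \<integral> l\<^sup>\<alpha>\<close> at \<open>\<alpha> = 1\<close> being the KL divergence.\<close>

lemma abs_exp_minus_one_le: "\<bar>exp x - 1\<bar> \<le> \<bar>x\<bar> * exp \<bar>x\<bar>" for x :: real
proof (cases "x \<ge> 0")
  case True
  have "exp (-x) \<ge> 1 - x" using exp_ge_add_one_self[of "-x"] by simp
  hence "1 \<ge> (1 - x) * exp x" by (simp add: exp_minus field_simps)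
  thus ?thesis using True by (simp add: algebra_simps)
next
  case False
  have "exp x \<ge> 1 + x" using exp_ge_add_one_self[of x] by simp
  moreover have "exp x \<le> 1" "exp \<bar>x\<bar> \<ge> 1" using False by simp_all
  ultimately show ?thesis using False
    by (smt (verit, ccfv_SIG) mult_le_cancel_left1)
qed

lemma exp_diff_quotient_tendsto: "((\<lambda>g. (exp (g * t) - 1) / g) \<longlongrightarrow> t) (at 0)" for t :: real
proof -
  have "((\<lambda>g. exp (g * t)) has_real_derivative (exp (0 * t) * t)) (at 0)"
    by (auto intro!: derivative_eq_intros)
  thus ?thesis by (simp add: has_field_derivative_iff)
qed

lemma abs_powr_diff_quotient_le:
  fixes x g :: real
  assumes "x \<ge> 0" "\<bar>g\<bar> \<le> 1/2" "g \<noteq> 0"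
  shows "\<bar>(x powr (1 + g) - x) / g\<bar> \<le> 2 + x powr (5/2)"
proof (cases "x = 0")
  case False
  with assms have "x > 0" by simp
  define t where "t = ln x"
  have x: "x = exp t" using \<open>x > 0\<close> by (simp add: t_def)
  have "(x powr (1 + g) - x) / g = exp t * ((exp (g * t) - 1) / g)"
    unfolding x powr_def by (simp add: exp_add[symmetric] algebra_simps diff_divide_distrib)
  also have "\<bar>\<dots>\<bar> \<le> exp t * (\<bar>t\<bar> * exp (\<bar>t\<bar>/2))"
  proof -
    have "\<bar>exp (g * t) - 1\<bar> \<le> \<bar>g * t\<bar> * exp \<bar>g * t\<bar>" by (rule abs_exp_minus_one_le)
    also have "\<dots> \<le> \<bar>g\<bar> * (\<bar>t\<bar> * exp (\<bar>t\<bar>/2))"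
    proof -
      have "\<bar>g * t\<bar> \<le> \<bar>t\<bar>/2"
        using assms(2) mult_right_mono[of "\<bar>g\<bar>" "1/2" "\<bar>t\<bar>"] by (simp add: abs_mult)
      hence "\<bar>g * t\<bar> * exp \<bar>g * t\<bar> \<le> \<bar>g * t\<bar> * exp (\<bar>t\<bar>/2)" by (intro mult_left_mono) auto
      thus ?thesis by (simp add: abs_mult mult.assoc)
    qed
    finally show ?thesis
      using assms(3) by (simp add: abs_mult abs_divide divide_le_eq mult.commute mult.left_commute)
  qed
  also have "\<dots> \<le> 2 + x powr (5/2)"
  proof (cases "t \<ge> 0")
    case True
    have "t \<le> exp t" using exp_ge_add_one_self[of t] by linarith
    hence "exp t * (\<bar>t\<bar> * exp (\<bar>t\<bar>/2)) \<le> exp t * (exp t * exp (t/2))"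
      using True by (simp add: mult_left_mono mult_right_mono)
    also have "\<dots> = x powr (5/2)" unfolding x powr_def by (simp flip: exp_add)
    finally show ?thesis by simp
  next
    case False
    have "\<bar>t\<bar>/2 \<le> exp (\<bar>t\<bar>/2)" using exp_ge_add_one_self[of "\<bar>t\<bar>/2"] by linarith
    hence "exp t * (\<bar>t\<bar> * exp (\<bar>t\<bar>/2)) \<le> exp t * (2 * exp (\<bar>t\<bar>/2) * exp (\<bar>t\<bar>/2))"
      by (simp add: mult_left_mono mult_right_mono)
    also have "\<dots> = 2" using False by (simp flip: exp_add)
    finally show ?thesis using powr_ge_zero[of x "5/2"] by linarith
  qed
  finally show ?thesis .
qed simp

lemma powr_diff_quotient_tendsto:
  fixes x :: real and g :: "nat \<Rightarrow> real"
  assumes "x \<ge> 0" "g \<longlonglongrightarrow> 0" "\<And>k. g k \<noteq> 0"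
  shows "(\<lambda>k. (x powr (1 + g k) - x) / g k) \<longlonglongrightarrow> x * ln x"
proof (cases "x = 0")
  case False
  with assms have "x > 0" by simp
  have "(x powr (1 + g k) - x) / g k = x * ((exp (g k * ln x) - 1) / g k)" for k
    using \<open>x > 0\<close> by (simp add: powr_def exp_add distrib_right algebra_simps diff_divide_distrib)
  moreover have "filterlim g (at 0) sequentially"
    using assms(2,3) by (simp add: filterlim_at)
  ultimately show ?thesis
    by (simp only:) (intro tendsto_mult tendsto_const filterlim_compose[OF exp_diff_quotient_tendsto])
qed simp

lemma diff_one_le_mult_ln:
  fixes x :: real
  assumes "0 \<le> x"
  shows "x - 1 \<le> x * ln x"
proof (cases "x = 0")
  case False
  with assms have "0 < x" by simp
  have "- ln x \<le> 1 / x - 1" using ln_le_minus_one[of "1 / x"] \<open>0 < x\<close> by (simp add: ln_div)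
  hence "x * (- ln x) \<le> x * (1 / x - 1)" using \<open>0 < x\<close> by (intro mult_left_mono) auto
  thus ?thesis using \<open>0 < x\<close> by (simp add: algebra_simps)
qed simp

lemma abs_mult_ln_le:
  fixes x :: real
  assumes "0 \<le> x"
  shows "\<bar>x * ln x\<bar> \<le> 1 + x powr 2"
proof (cases "x = 0")
  case False
  with assms have "0 < x" by simp
  have "x * ln x \<le> x * (x - 1)" using \<open>0 < x\<close> by (intro mult_left_mono ln_le_minus_one) auto
  moreover have "x powr 2 = x * x" using \<open>0 < x\<close> by (simp add: powr_numeral power2_eq_square)
  moreover have "0 \<le> x * x" by simp
  ultimately show ?thesis
    using diff_one_le_mult_ln[OF assms] \<open>0 < x\<close> unfolding abs_le_iff right_diff_distrib mult_1_right
    by (intro conjI) linarith+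
qed simp

lemma mvt_within:
  fixes f f' :: "real \<Rightarrow> real"
  assumes "a < b" "{a..b} \<subseteq> S" "\<And>x. a \<le> x \<Longrightarrow> x \<le> b \<Longrightarrow> (f has_real_derivative f' x) (at x within S)"
  shows "\<exists>z. a < z \<and> z < b \<and> f b - f a = f' z * (b - a)"
proof -
  have "\<exists>z\<in>{a<..<b}. f b - f a = f' z * (b - a)"
  proof (rule mvt_simple[OF assms(1)])
    fix x assume "a \<le> x" "x \<le> b"
    hence "(f has_real_derivative f' x) (at x within {a..b})"
      using assms(2,3) has_field_derivative_subset by blast
    thus "(f has_derivative (\<lambda>h. f' x * h)) (at x within {a..b})"
      by (simp add: has_field_derivative_def)
  qed
  thus ?thesis by auto
qed

lemma concave_le_tangent:
  fixes g g' g'' :: "real \<Rightarrow> real"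
  assumes "\<And>x. x \<in> S \<Longrightarrow> (g has_real_derivative g' x) (at x within S)"
    and "\<And>x. x \<in> S \<Longrightarrow> (g' has_real_derivative g'' x) (at x within S)"
    and "\<And>x. x \<in> S \<Longrightarrow> g'' x \<le> 0"
    and interval: "\<And>x y. x \<in> S \<Longrightarrow> y \<in> S \<Longrightarrow> {x..y} \<subseteq> S"
    and "x \<in> S" "y \<in> S"
  shows "g y \<le> g x + g' x * (y - x)"
proof -
  have g'_antimono: "g' q \<le> g' p" if pq: "p \<in> S" "q \<in> S" "p < q" for p q
  proof -
    obtain z where z: "p < z" "z < q" "g' q - g' p = g'' z * (q - p)"
      using mvt_within[OF \<open>p < q\<close> interval[OF pq(1,2)], of g' g''] assms(2) interval[OF pq(1,2)]
      by fastforce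
    have "z \<in> S" using interval[OF pq(1,2)] z by auto
    hence "g'' z * (q - p) \<le> 0" using assms(3)[of z] \<open>p < q\<close> by (intro mult_nonpos_nonneg) auto
    thus ?thesis using z(3) by linarith
  qed
  show ?thesis
  proof (cases x y rule: linorder_cases)
    case less
    obtain z where z: "x < z" "z < y" "g y - g x = g' z * (y - x)"
      using mvt_within[OF less interval[OF assms(5,6)], of g g'] assms(1) interval[OF assms(5,6)]
      by fastforce
    have "z \<in> S" using interval[OF assms(5,6)] z by auto
    hence "g' z * (y - x) \<le> g' x * (y - x)"
      using g'_antimono[of x z] assms(5) z less by (intro mult_right_mono) auto
    thus ?thesis using z(3) by linarith
  next
    case greater
    obtain z where z: "y < z" "z < x" "g x - g y = g' z * (x - y)"
      using mvt_within[OF greater interval[OF assms(6,5)], of g g'] assms(1) interval[OF assms(6,5)]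
      by fastforce
    have "z \<in> S" using interval[OF assms(6,5)] z by auto
    hence "g' x * (x - y) \<le> g' z * (x - y)"
      using g'_antimono[of z x] assms(5) z greater by (intro mult_right_mono) auto
    thus ?thesis using z(3) by (simp add: algebra_simps)
  qed simp
qed

lemma le_powr_mult_powr:
  fixes x T \<beta> :: real
  assumes "0 \<le> x" "x \<le> T" "0 \<le> \<beta>"
  shows "x \<le> T powr \<beta> * x powr (1 - \<beta>)"
proof (cases "x = 0")
  case False
  with assms have "x = x powr \<beta> * x powr (1 - \<beta>)" by (simp flip: powr_add)
  also have "\<dots> \<le> T powr \<beta> * x powr (1 - \<beta>)" using assms by (intro mult_right_mono powr_mono2) auto
  finally show ?thesis .
qed simp

text \<open>Young's inequality where \<open>L \<le> M\<^sub>0\<close>, and \<open>L \<le> L\<^sup>1\<^sup>+\<^sup>\<gamma> / M\<^sub>0\<^sup>\<gamma>\<close> where \<open>L > M\<^sub>0\<close>.\<close>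

lemma mult_le_young_plus_tail:
  fixes f L B M\<^sub>0 \<theta> \<gamma> :: real
  assumes "0 \<le> f" "f \<le> B" "0 \<le> L" "0 < M\<^sub>0" "0 < \<theta>" "0 < \<gamma>"
  shows "f * L \<le> \<theta> / 2 * f\<^sup>2 + M\<^sub>0 / (2 * \<theta>) * L + B / M\<^sub>0 powr \<gamma> * L powr (1 + \<gamma>)"
proof (cases "L \<le> M\<^sub>0")
  case True
  have "0 \<le> (\<theta> * f - L)\<^sup>2" by simp
  hence "f * L \<le> \<theta> / 2 * f\<^sup>2 + L\<^sup>2 / (2 * \<theta>)"
    using assms(5) by (simp add: field_simps power2_eq_square)
  moreover have "L\<^sup>2 / (2 * \<theta>) \<le> M\<^sub>0 / (2 * \<theta>) * L"
    using True assms by (simp add: power2_eq_square divide_right_mono mult_right_mono)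
  moreover have "0 \<le> B / M\<^sub>0 powr \<gamma> * L powr (1 + \<gamma>)" using assms by simp
  ultimately show ?thesis by linarith
next
  case False
  hence "L > 0" using assms by simp
  have "f * L \<le> B * L" using assms by (intro mult_right_mono) auto
  also have "\<dots> \<le> B * (L * (L / M\<^sub>0) powr \<gamma>)"
    using False assms \<open>L > 0\<close> ge_one_powr_ge_zero[of "L / M\<^sub>0" \<gamma>] by (intro mult_left_mono) auto
  also have "\<dots> = B / M\<^sub>0 powr \<gamma> * L powr (1 + \<gamma>)"
    using \<open>L > 0\<close> assms(4) by (simp add: powr_add powr_divide)
  finally have "f * L \<le> B / M\<^sub>0 powr \<gamma> * L powr (1 + \<gamma>)" .
  moreover have "0 \<le> \<theta> / 2 * f\<^sup>2 + M\<^sub>0 / (2 * \<theta>) * L" using assms by simp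
  ultimately show ?thesis by linarith
qed

lemma eventually_exp_less_min:
  fixes C\<^sub>1 C D s \<tau> :: real
  assumes "0 < D" "0 < C" "s < \<tau>" "0 < \<tau>"
  shows "\<forall>\<^sub>F n in sequentially. C\<^sub>1 * exp (- \<tau> * n) < min D (C * exp (- s * n))"
proof -
  have "(\<lambda>n. C\<^sub>1 * exp (- \<tau> * n)) \<longlonglongrightarrow> 0"
    by (intro tendsto_mult_right_zero) (use \<open>0 < \<tau>\<close> in real_asymp)
  hence less_D: "\<forall>\<^sub>F n in sequentially. C\<^sub>1 * exp (- \<tau> * n) < D" using \<open>0 < D\<close> by (rule order_tendstoD(2))
  have "(\<lambda>n. C\<^sub>1 * exp (- (\<tau> - s) * n)) \<longlonglongrightarrow> 0"
    by (intro tendsto_mult_right_zero) (use \<open>s < \<tau>\<close> in real_asymp)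
  hence "\<forall>\<^sub>F n in sequentially. C\<^sub>1 * exp (- (\<tau> - s) * n) < C" using \<open>0 < C\<close> by (rule order_tendstoD(2))
  hence "\<forall>\<^sub>F n in sequentially. C\<^sub>1 * exp (- \<tau> * n) < C * exp (- s * n)"
  proof eventually_elim
    case (elim n)
    have "C\<^sub>1 * exp (- \<tau> * n) = C\<^sub>1 * exp (- (\<tau> - s) * n) * exp (- s * n)"
      by (simp add: algebra_simps flip: exp_add)
    also have "\<dots> < C * exp (- s * n)" using elim by (intro mult_strict_right_mono) auto
    finally show ?case .
  qed
  with less_D show ?thesis by eventually_elim simp
qed

lemma interior_real_nbhd:
  fixes y :: real
  assumes "y \<in> interior S"
  obtains e where "0 < e" "y - e \<in> S" "y + e \<in> S"
proof -
  obtain e where "0 < e" "ball y e \<subseteq> S" using assms by (auto simp: mem_interior)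
  hence "y - e / 2 \<in> S" "y + e / 2 \<in> S" by (auto simp: subset_eq dist_real_def)
  thus ?thesis using that[of "e / 2"] \<open>0 < e\<close> by simp
qed

lemma obtain_MIN_less:
  fixes f g :: "'a \<Rightarrow> 'b::linorder"
  assumes "finite S" "S \<noteq> {}" "(MIN a\<in>S. g a) < (MIN a\<in>S. f a)"
  obtains a' where "a' \<in> S" "\<And>a. a \<in> S \<Longrightarrow> g a' < f a"
proof -
  have "(MIN a\<in>S. g a) \<in> g ` S" using assms(1,2) by (intro Min_in) auto
  then obtain a' where "a' \<in> S" "g a' = (MIN a\<in>S. g a)" by auto
  moreover have "(MIN a\<in>S. f a) \<le> f a" if "a \<in> S" for a using assms(1) that by simp
  ultimately show ?thesis using that assms(3) by (metis order.strict_trans2)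
qed

lemma exists_separating_rates:
  fixes K :: "'a \<Rightarrow> real"
  assumes "finite S" "S \<noteq> {}" "0 \<le> k" "\<And>a. a \<in> S \<Longrightarrow> k < K a"
  shows "\<exists>s \<tau>. k < s \<and> s < \<tau> \<and> 0 < \<tau> \<and> (\<forall>a\<in>S. \<tau> < K a)"
proof -
  define Kmin where "Kmin = Min (K ` S)"
  have "k < Kmin" using assms by (simp add: Kmin_def)
  have Kmin_le: "Kmin \<le> K a" if "a \<in> S" for a using assms(1) that by (simp add: Kmin_def)
  show ?thesis
    using \<open>k < Kmin\<close> assms(3) Kmin_le by (intro exI[of _ "(k + Kmin) / 2"] exI[of _ "(k + 3 * Kmin) / 4"]) force
qed

lemma PiM_density:
  fixes l :: "'x \<Rightarrow> real"
  assumes "finite I" "sigma_finite_measure M" "sigma_finite_measure (density M l)"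
    and [measurable]: "l \<in> borel_measurable M" and l_nonneg: "\<And>x. x \<in> space M \<Longrightarrow> 0 \<le> l x"
  shows "PiM I (\<lambda>_. density M l) = density (PiM I (\<lambda>_. M)) (\<lambda>x. ennreal (\<Prod>i\<in>I. l (x i)))"
proof -
  interpret PM: product_sigma_finite "\<lambda>_. M" using assms(2) by (simp add: product_sigma_finite_def)
  interpret PD: product_sigma_finite "\<lambda>_. density M l" using assms(3) by (simp add: product_sigma_finite_def)
  show ?thesis
  proof (rule PD.PiM_eqI[symmetric])
    fix A assume "\<And>i. i \<in> I \<Longrightarrow> A i \<in> sets (density M l)"
    hence A[measurable]: "\<And>i. i \<in> I \<Longrightarrow> A i \<in> sets M" by simp
    have "emeasure (density (PiM I (\<lambda>_. M)) (\<lambda>x. ennreal (\<Prod>i\<in>I. l (x i)))) (PiE I A)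
        = (\<integral>\<^sup>+x. ennreal (\<Prod>i\<in>I. l (x i)) * indicator (PiE I A) x \<partial>PiM I (\<lambda>_. M))"
      using A by (intro emeasure_density sets_PiM_I_finite assms(1)) auto
    also have "\<dots> = (\<integral>\<^sup>+x. (\<Prod>i\<in>I. ennreal (l (x i)) * indicator (A i) (x i)) \<partial>PiM I (\<lambda>_. M))"
    proof (rule nn_integral_cong)
      fix x assume "x \<in> space (PiM I (\<lambda>_. M))"
      hence x: "\<And>i. i \<in> I \<Longrightarrow> x i \<in> space M" "x \<in> extensional I" by (auto simp: space_PiM PiE_def)
      have "indicator (PiE I A) x = (\<Prod>i\<in>I. indicator (A i) (x i) :: ennreal)"
        using x(2) assms(1) by (auto simp: indicator_def PiE_def Pi_def prod_zero_iff)
      moreover have "ennreal (\<Prod>i\<in>I. l (x i)) = (\<Prod>i\<in>I. ennreal (l (x i)))"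
        using x l_nonneg by (intro prod_ennreal[symmetric]) auto
      ultimately show "ennreal (\<Prod>i\<in>I. l (x i)) * indicator (PiE I A) x
          = (\<Prod>i\<in>I. ennreal (l (x i)) * indicator (A i) (x i))"
        by (simp add: prod.distrib)
    qed
    also have "\<dots> = (\<Prod>i\<in>I. \<integral>\<^sup>+x. ennreal (l x) * indicator (A i) x \<partial>M)"
      using A by (intro PM.product_nn_integral_prod assms(1)) auto
    also have "\<dots> = (\<Prod>i\<in>I. emeasure (density M l) (A i))"
      using A by (intro prod.cong refl emeasure_density[symmetric]) auto
    finally show "emeasure (density (PiM I (\<lambda>_. M)) (\<lambda>x. ennreal (\<Prod>i\<in>I. l (x i)))) (PiE I A)
        = (\<Prod>i\<in>I. emeasure (density M l) (A i))" .
  qed (use assms(1) in \<open>auto intro!: sets_PiM_cong\<close>)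
qed

lemma integrable_min_diff_sq:
  fixes w :: "'x \<Rightarrow> real" and wl w\<^sub>0 :: real
  assumes "prob_space P" "w \<in> borel_measurable P" "\<And>x. x \<in> space P \<Longrightarrow> wl \<le> w x" "wl \<le> w\<^sub>0"
  shows "integrable P (\<lambda>x. (min (w x - w\<^sub>0) 0)\<^sup>2)"
proof -
  interpret prob_space P by fact
  show ?thesis
    using assms(2-4) by (intro integrable_const_bound[where B = "(w\<^sub>0 - wl)\<^sup>2"] AE_I2)
      (auto simp: min_def abs_le_square_iff[symmetric])
qed

lemma integral_affine_indicator:
  assumes "prob_space N" "S \<in> sets N"
  shows "integrable N (\<lambda>x. \<alpha> + \<beta> * indicator S x :: real)"
    and "(\<integral>x. \<alpha> + \<beta> * indicator S x \<partial>N) = \<alpha> + \<beta> * measure N S"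
proof -
  interpret prob_space N by fact
  have ind: "integrable N (indicator S :: _ \<Rightarrow> real)"
    using assms(2) by (intro integrable_real_indicator) (auto simp: less_top[symmetric])
  thus "integrable N (\<lambda>x. \<alpha> + \<beta> * indicator S x :: real)" by simp
  have "(\<integral>x. \<alpha> + \<beta> * indicator S x \<partial>N) = (\<integral>x. \<alpha> \<partial>N) + (\<integral>x. \<beta> * indicator S x \<partial>N)"
    using ind by (intro Bochner_Integration.integral_add) auto
  thus "(\<integral>x. \<alpha> + \<beta> * indicator S x \<partial>N) = \<alpha> + \<beta> * measure N S"
    using assms(2) prob_space by simp
qed

lemma card_image_affine_indicator:
  assumes "S \<subseteq> T" "S \<noteq> {}" "S \<noteq> T" "a \<noteq> b"
  shows "card ((\<lambda>x. a + (b - a) * indicator S x :: real) ` T) = 2"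
proof -
  have "(\<lambda>x. a + (b - a) * indicator S x :: real) ` T = {a, b}"
    using assms(1-3) by (auto simp: indicator_def image_iff)
  thus ?thesis using assms(4) by simp
qed

locale likelihood_ratio = prob_space M for M :: "'x measure" +
  fixes l :: "'x \<Rightarrow> real"
  assumes borel_measurable_l [measurable]: "l \<in> borel_measurable M"
    and nonneg: "\<And>x. 0 \<le> l x"
    and integrable_powr: "\<And>r. 0 < r \<Longrightarrow> integrable M (\<lambda>x. l x powr r)"
    and integral_eq_1: "(\<integral>x. l x \<partial>M) = 1"
begin

lemma integrable_l: "integrable M l"
  using integrable_powr[of 1] nonneg by simp

lemma integrable_mult_ln: "integrable M (\<lambda>x. l x * ln (l x))"
proof (rule Bochner_Integration.integrable_bound)
  show "integrable M (\<lambda>x. 1 + l x powr 2)" using integrable_powr[of 2] by simp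
  show "AE x in M. norm (l x * ln (l x)) \<le> norm (1 + l x powr 2)"
    using nonneg abs_mult_ln_le by (intro AE_I2) simp
qed measurable

lemma integral_mult_ln_nonneg: "0 \<le> (\<integral>x. l x * ln (l x) \<partial>M)"
proof -
  have "(\<integral>x. l x - 1 \<partial>M) \<le> (\<integral>x. l x * ln (l x) \<partial>M)"
    using integrable_l integrable_mult_ln nonneg diff_one_le_mult_ln by (intro integral_mono) auto
  also have "(\<integral>x. l x - 1 \<partial>M) = 0" using integrable_l integral_eq_1 prob_space by simp
  finally show ?thesis by simp
qed

lemma moment_diff_quotient_tendsto:
  assumes "g \<longlonglongrightarrow> 0" "\<And>k. g k \<noteq> 0" "\<And>k. \<bar>g k\<bar> \<le> 1/2"
  shows "(\<lambda>k. ((\<integral>x. l x powr (1 + g k) \<partial>M) - 1) / g k) \<longlonglongrightarrow> (\<integral>x. l x * ln (l x) \<partial>M)"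
proof -
  have lim: "(\<lambda>k. \<integral>x. (l x powr (1 + g k) - l x) / g k \<partial>M) \<longlonglongrightarrow> (\<integral>x. l x * ln (l x) \<partial>M)"
  proof (rule integral_dominated_convergence)
    show "integrable M (\<lambda>x. 2 + l x powr (5/2))" using integrable_powr[of "5/2"] by simp
    show "AE x in M. (\<lambda>k. (l x powr (1 + g k) - l x) / g k) \<longlonglongrightarrow> l x * ln (l x)"
      using assms nonneg by (intro AE_I2 powr_diff_quotient_tendsto) auto
    show "AE x in M. norm ((l x powr (1 + g k) - l x) / g k) \<le> 2 + l x powr (5/2)" for k
      unfolding real_norm_def by (intro AE_I2 abs_powr_diff_quotient_le nonneg assms)
  qed measurable
  have eq: "(\<integral>x. (l x powr (1 + g k) - l x) / g k \<partial>M) = ((\<integral>x. l x powr (1 + g k) \<partial>M) - 1) / g k"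
    for k
  proof -
    have "1 + g k > 0" using assms(3)[of k] by linarith
    thus ?thesis using integrable_powr[of "1 + g k"] integrable_l integral_eq_1 by simp
  qed
  show ?thesis using lim unfolding eq .
qed

lemma obtain_lower_moment_lt_exp:
  assumes "\<tau> < (\<integral>x. l x * ln (l x) \<partial>M)"
  obtains \<beta> where "0 < \<beta>" "\<beta> < 1" "(\<integral>x. l x powr (1 - \<beta>) \<partial>M) < exp (- \<beta> * \<tau>)"
proof -
  define g where "g k = - 1 / (real k + 2)" for k
  have g: "g \<longlonglongrightarrow> 0" "g k < 0" "\<bar>g k\<bar> \<le> 1/2" for k
    unfolding g_def by real_asymp (auto simp: field_simps)
  have "(\<lambda>k. ((\<integral>x. l x powr (1 + g k) \<partial>M) - 1) / g k) \<longlonglongrightarrow> (\<integral>x. l x * ln (l x) \<partial>M)"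
    using g by (intro moment_diff_quotient_tendsto) (auto simp: less_le)
  from order_tendstoD(1)[OF this assms] obtain k where "\<tau> < ((\<integral>x. l x powr (1 + g k) \<partial>M) - 1) / g k"
    by (auto simp: eventually_sequentially)
  hence "(\<integral>x. l x powr (1 + g k) \<partial>M) < 1 + \<tau> * g k"
    using g(2)[of k] by (simp add: neg_less_divide_eq mult.commute)
  also have "\<dots> \<le> exp (\<tau> * g k)" by (rule exp_ge_add_one_self)
  finally show ?thesis using that[of "- g k"] g(2,3)[of k] by (simp add: mult.commute)
qed

lemma obtain_higher_moment_lt_exp:
  assumes "(\<integral>x. l x * ln (l x) \<partial>M) < s"
  obtains \<gamma> where "0 < \<gamma>" "(\<integral>x. l x powr (1 + \<gamma>) \<partial>M) < exp (\<gamma> * s)"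
proof -
  define g where "g k = 1 / (real k + 2)" for k
  have g: "g \<longlonglongrightarrow> 0" "g k > 0" "\<bar>g k\<bar> \<le> 1/2" for k
    unfolding g_def by real_asymp (auto simp: field_simps)
  have "(\<lambda>k. ((\<integral>x. l x powr (1 + g k) \<partial>M) - 1) / g k) \<longlonglongrightarrow> (\<integral>x. l x * ln (l x) \<partial>M)"
    using g by (intro moment_diff_quotient_tendsto) (auto simp: less_le)
  from order_tendstoD(2)[OF this assms] obtain k where "((\<integral>x. l x powr (1 + g k) \<partial>M) - 1) / g k < s"
    by (auto simp: eventually_sequentially)
  hence "(\<integral>x. l x powr (1 + g k) \<partial>M) < 1 + s * g k"
    using g(2)[of k] by (simp add: pos_divide_less_eq mult.commute)
  also have "\<dots> \<le> exp (s * g k)" by (rule exp_ge_add_one_self)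
  finally show ?thesis using that[of "g k"] g(2)[of k] by (simp add: mult.commute)
qed

lemma prod_l_nonneg: "0 \<le> (\<Prod>i\<in>I. l (x i))"
  using nonneg by (simp add: prod_nonneg)

lemma integrable_prod_powr:
  assumes "finite I" "0 < r"
  shows "integrable (PiM I (\<lambda>_. M)) (\<lambda>x. (\<Prod>i\<in>I. l (x i)) powr r)"
proof -
  interpret product_sigma_finite "\<lambda>_. M" by unfold_locales
  show ?thesis
    using assms integrable_powr product_integrable_prod[of I "\<lambda>_ y. l y powr r"]
    by (simp add: prod_powr_distrib nonneg)
qed

lemma integral_prod_powr:
  assumes "finite I" "0 < r"
  shows "(\<integral>x. (\<Prod>i\<in>I. l (x i)) powr r \<partial>PiM I (\<lambda>_. M)) = (\<integral>x. l x powr r \<partial>M) ^ card I"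
proof -
  interpret product_sigma_finite "\<lambda>_. M" by unfold_locales
  show ?thesis
    using assms integrable_powr product_integral_prod[of I "\<lambda>_ y. l y powr r"]
    by (simp add: prod_powr_distrib nonneg)
qed

lemma integrable_prod: "finite I \<Longrightarrow> integrable (PiM I (\<lambda>_. M)) (\<lambda>x. \<Prod>i\<in>I. l (x i))"
  using integrable_prod_powr[of I 1] by (simp add: prod_l_nonneg abs_of_nonneg)

lemma integral_prod: "finite I \<Longrightarrow> (\<integral>x. (\<Prod>i\<in>I. l (x i)) \<partial>PiM I (\<lambda>_. M)) = 1"
  using integral_prod_powr[of I 1] integral_eq_1 by (simp add: prod_l_nonneg nonneg abs_of_nonneg)

lemma prob_prod_gt_le:
  assumes "finite I" "0 < T"
  shows "measure (PiM I (\<lambda>_. M)) {x \<in> space (PiM I (\<lambda>_. M)). T < (\<Prod>i\<in>I. l (x i))} \<le> 1 / T"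
proof -
  let ?P = "PiM I (\<lambda>_. M)"
  interpret P: prob_space ?P by (rule prob_space_PiM) (rule prob_space_axioms)
  have "measure ?P {x \<in> space ?P. T < (\<Prod>i\<in>I. l (x i))} \<le> measure ?P {x \<in> space ?P. T \<le> (\<Prod>i\<in>I. l (x i))}"
    by (intro P.finite_measure_mono) auto
  also have "\<dots> \<le> (\<integral>x. (\<Prod>i\<in>I. l (x i)) \<partial>?P) / T"
    using assms prod_l_nonneg by (intro integral_Markov_inequality_measure integrable_prod) auto
  finally show ?thesis using integral_prod[OF assms(1)] by simp
qed

lemma measure_density_prod_le:
  assumes "finite I" "0 < T" "0 < \<beta>" "\<beta> < 1" "S \<in> sets (PiM I (\<lambda>_. M))"
    and "\<And>x. x \<in> S \<Longrightarrow> (\<Prod>i\<in>I. l (x i)) \<le> T"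
  shows "measure (density (PiM I (\<lambda>_. M)) (\<lambda>x. ennreal (\<Prod>i\<in>I. l (x i)))) S
           \<le> T powr \<beta> * (\<integral>x. l x powr (1 - \<beta>) \<partial>M) ^ card I"
proof -
  let ?P = "PiM I (\<lambda>_. M)" and ?L = "\<lambda>x. \<Prod>i\<in>I. l (x i)"
  have "measure (density ?P ?L) S = (\<integral>x. ?L x * indicator S x \<partial>?P)"
    using assms(5) prod_l_nonneg by (subst integral_real_density[symmetric]) auto
  also have "\<dots> \<le> (\<integral>x. T powr \<beta> * ?L x powr (1 - \<beta>) \<partial>?P)"
  proof (rule integral_mono)
    show "integrable ?P (\<lambda>x. ?L x * indicator S x)"
      using integrable_mult_indicator[OF assms(5) integrable_prod[OF assms(1)]] by (simp add: mult.commute)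
    show "integrable ?P (\<lambda>x. T powr \<beta> * ?L x powr (1 - \<beta>))"
      using integrable_prod_powr[of I "1 - \<beta>"] assms by simp
    show "?L x * indicator S x \<le> T powr \<beta> * ?L x powr (1 - \<beta>)" for x
      using assms(3,6) prod_l_nonneg[of x I] le_powr_mult_powr[of "?L x" T \<beta>]
      by (cases "x \<in> S") auto
  qed
  also have "\<dots> = T powr \<beta> * (\<integral>x. l x powr (1 - \<beta>) \<partial>M) ^ card I"
    using integral_prod_powr[of I "1 - \<beta>"] assms by simp
  finally show ?thesis .
qed

lemma integral_density_prod_le:
  fixes f :: "('i \<Rightarrow> 'x) \<Rightarrow> real"
  assumes "finite I" and [measurable]: "f \<in> borel_measurable (PiM I (\<lambda>_. M))"
    and f: "\<And>x. x \<in> space (PiM I (\<lambda>_. M)) \<Longrightarrow> 0 \<le> f x \<and> f x \<le> B"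
    and "0 < M\<^sub>0" "0 < \<theta>" "0 < \<gamma>"
  shows "(\<integral>x. f x \<partial>density (PiM I (\<lambda>_. M)) (\<lambda>x. ennreal (\<Prod>i\<in>I. l (x i))))
         \<le> \<theta> / 2 * (\<integral>x. (f x)\<^sup>2 \<partial>PiM I (\<lambda>_. M)) + M\<^sub>0 / (2 * \<theta>)
           + B / M\<^sub>0 powr \<gamma> * (\<integral>x. l x powr (1 + \<gamma>) \<partial>M) ^ card I"
proof -
  let ?P = "PiM I (\<lambda>_. M)" and ?L = "\<lambda>x. \<Prod>i\<in>I. l (x i)"
  interpret P: prob_space ?P by (rule prob_space_PiM) (rule prob_space_axioms)
  have B: "0 \<le> B" using f[of "SOME x. x \<in> space ?P"] P.not_empty some_in_eq by fastforce
  have int_f2: "integrable ?P (\<lambda>x. (f x)\<^sup>2)"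
    by (rule P.integrable_const_bound[where B = "B\<^sup>2"]) (use f in \<open>auto intro!: AE_I2 power_mono\<close>)
  have int_L: "integrable ?P ?L" and int_Lpowr: "integrable ?P (\<lambda>x. ?L x powr (1 + \<gamma>))"
    using integrable_prod integrable_prod_powr[of I "1 + \<gamma>"] assms by auto
  have int_Lf: "integrable ?P (\<lambda>x. ?L x * f x)"
  proof (rule Bochner_Integration.integrable_bound)
    show "integrable ?P (\<lambda>x. B * ?L x)" using int_L by simp
    show "AE x in ?P. norm (?L x * f x) \<le> norm (B * ?L x)"
    proof (rule AE_I2)
      fix x assume "x \<in> space ?P"
      hence "f x * ?L x \<le> B * ?L x" using f prod_l_nonneg by (intro mult_right_mono) auto
      thus "norm (?L x * f x) \<le> norm (B * ?L x)"
        using f[OF \<open>x \<in> space ?P\<close>] B by (simp add: abs_mult abs_of_nonneg prod_l_nonneg mult.commute)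
    qed
  qed measurable
  have "(\<integral>x. f x \<partial>density ?P ?L) = (\<integral>x. ?L x * f x \<partial>?P)"
    using prod_l_nonneg by (intro integral_real_density) auto
  also have "\<dots> \<le> (\<integral>x. \<theta> / 2 * (f x)\<^sup>2 + M\<^sub>0 / (2 * \<theta>) * ?L x + B / M\<^sub>0 powr \<gamma> * ?L x powr (1 + \<gamma>) \<partial>?P)"
  proof (rule integral_mono)
    fix x assume "x \<in> space ?P"
    have "f x * ?L x \<le> \<theta> / 2 * (f x)\<^sup>2 + M\<^sub>0 / (2 * \<theta>) * ?L x + B / M\<^sub>0 powr \<gamma> * ?L x powr (1 + \<gamma>)"
      using f[OF \<open>x \<in> space ?P\<close>] prod_l_nonneg assms(4-6) by (intro mult_le_young_plus_tail) auto
    thus "?L x * f x \<le> \<theta> / 2 * (f x)\<^sup>2 + M\<^sub>0 / (2 * \<theta>) * ?L x + B / M\<^sub>0 powr \<gamma> * ?L x powr (1 + \<gamma>)"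
      by (simp add: mult.commute[of "?L x" "f x"])
  qed (use int_Lf int_f2 int_L int_Lpowr in simp_all)
  also have "\<dots> = \<theta> / 2 * (\<integral>x. (f x)\<^sup>2 \<partial>?P) + M\<^sub>0 / (2 * \<theta>)
           + B / M\<^sub>0 powr \<gamma> * (\<integral>x. l x powr (1 + \<gamma>) \<partial>M) ^ card I"
    using int_f2 int_L int_Lpowr integral_prod integral_prod_powr[of I "1 + \<gamma>"] assms by simp
  finally show ?thesis .
qed

lemma integral_sq_gt_of_integral_density_gt:
  fixes f :: "('i \<Rightarrow> 'x) \<Rightarrow> real"
  assumes "finite I" and "f \<in> borel_measurable (PiM I (\<lambda>_. M))"
    and "\<And>x. x \<in> space (PiM I (\<lambda>_. M)) \<Longrightarrow> 0 \<le> f x \<and> f x \<le> B"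
    and "0 < M\<^sub>0" "0 < \<gamma>" "0 < \<Delta>"
    and tail: "B / M\<^sub>0 powr \<gamma> * (\<integral>x. l x powr (1 + \<gamma>) \<partial>M) ^ card I < \<Delta> / 8"
    and mean: "\<Delta> / 2 < (\<integral>x. f x \<partial>density (PiM I (\<lambda>_. M)) (\<lambda>x. ennreal (\<Prod>i\<in>I. l (x i))))"
  shows "\<Delta>\<^sup>2 / (8 * M\<^sub>0) < (\<integral>x. (f x)\<^sup>2 \<partial>PiM I (\<lambda>_. M))"
proof -
  define \<theta> where "\<theta> = 4 * M\<^sub>0 / \<Delta>"
  have "0 < \<theta>" "M\<^sub>0 / (2 * \<theta>) = \<Delta> / 8" using assms(4,6) by (simp_all add: \<theta>_def)
  with integral_density_prod_le[OF assms(1-4) \<open>0 < \<theta>\<close> assms(5)] tail mean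
  have "\<Delta> / 4 < \<theta> / 2 * (\<integral>x. (f x)\<^sup>2 \<partial>PiM I (\<lambda>_. M))" by linarith
  thus ?thesis using assms(4,6) by (simp add: \<theta>_def field_simps power2_eq_square)
qed

end

definition lratio :: "('a \<Rightarrow> 'x measure) \<Rightarrow> 'a \<Rightarrow> 'a \<Rightarrow> 'x \<Rightarrow> real" where
  "lratio \<mu> a\<^sub>0 a x = enn2real (RN_deriv (\<mu> a\<^sub>0) (\<mu> a) x)"

lemma borel_measurable_lratio [measurable]: "lratio \<mu> a\<^sub>0 a \<in> borel_measurable (\<mu> a\<^sub>0)"
  unfolding lratio_def by measurable

lemma lratio_nonneg: "0 \<le> lratio \<mu> a\<^sub>0 a x"
  by (simp add: lratio_def)

locale monitoring =
  fixes X :: "'x::euclidean_space set" and A :: "'a set" and \<mu> :: "'a \<Rightarrow> 'x measure"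
  assumes monitoring_tech: "monitoring_tech X A \<mu>"
begin

lemma prob_space_action: "a \<in> A \<Longrightarrow> prob_space (\<mu> a)"
  using monitoring_tech by (simp add: monitoring_tech_def)

lemma sets_action: "a \<in> A \<Longrightarrow> b \<in> A \<Longrightarrow> sets (\<mu> a) = sets (\<mu> b)"
  using monitoring_tech by (simp add: monitoring_tech_def)

lemma density_lratio:
  assumes "a\<^sub>0 \<in> A" "a \<in> A"
  shows "\<mu> a = density (\<mu> a\<^sub>0) (\<lambda>x. ennreal (lratio \<mu> a\<^sub>0 a x))"
proof -
  interpret M: prob_space "\<mu> a\<^sub>0" using assms(1) by (rule prob_space_action)
  interpret N: prob_space "\<mu> a" using assms(2) by (rule prob_space_action)
  have ac: "absolutely_continuous (\<mu> a\<^sub>0) (\<mu> a)"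
    using monitoring_tech assms by (simp add: monitoring_tech_def)
  have sets: "sets (\<mu> a) = sets (\<mu> a\<^sub>0)" using assms(2,1) by (rule sets_action)
  have "AE x in \<mu> a\<^sub>0. RN_deriv (\<mu> a\<^sub>0) (\<mu> a) x = ennreal (lratio \<mu> a\<^sub>0 a x)"
    using M.RN_deriv_finite[OF N.sigma_finite_measure_axioms ac sets]
    by eventually_elim (auto simp: lratio_def less_top)
  hence "density (\<mu> a\<^sub>0) (RN_deriv (\<mu> a\<^sub>0) (\<mu> a)) = density (\<mu> a\<^sub>0) (\<lambda>x. ennreal (lratio \<mu> a\<^sub>0 a x))"
    by (intro density_cong) auto
  thus ?thesis using M.density_RN_deriv[OF ac sets] by simp
qed

lemma likelihood_ratio:
  assumes "a\<^sub>0 \<in> A" "a \<in> A"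
  shows "likelihood_ratio (\<mu> a\<^sub>0) (lratio \<mu> a\<^sub>0 a)"
proof -
  interpret M: prob_space "\<mu> a\<^sub>0" using assms(1) by (rule prob_space_action)
  interpret N: prob_space "\<mu> a" using assms(2) by (rule prob_space_action)
  have "(\<integral>x. 1 \<partial>\<mu> a) = (\<integral>x. lratio \<mu> a\<^sub>0 a x * 1 \<partial>\<mu> a\<^sub>0)"
    by (subst density_lratio[OF assms]) (rule integral_real_density, auto simp: lratio_nonneg)
  moreover have "(\<integral>x. 1 \<partial>\<mu> a) = (1::real)" by (simp add: N.prob_space)
  ultimately have "(\<integral>x. lratio \<mu> a\<^sub>0 a x \<partial>\<mu> a\<^sub>0) = 1" by simp
  moreover have "integrable (\<mu> a\<^sub>0) (\<lambda>x. lratio \<mu> a\<^sub>0 a x powr r)" if "0 < r" for r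
  proof (rule integrableI_bounded)
    show "(\<integral>\<^sup>+x. ennreal (norm (lratio \<mu> a\<^sub>0 a x powr r)) \<partial>\<mu> a\<^sub>0) < \<infinity>"
      using monitoring_tech assms that by (simp add: monitoring_tech_def lratio_def)
  qed measurable
  ultimately show ?thesis
    by unfold_locales (auto simp: lratio_nonneg)
qed

lemma KL_eq_integral:
  assumes "a\<^sub>0 \<in> A" "a \<in> A"
  shows "KL (\<mu> a) (\<mu> a\<^sub>0) = ereal (\<integral>x. lratio \<mu> a\<^sub>0 a x * ln (lratio \<mu> a\<^sub>0 a x) \<partial>\<mu> a\<^sub>0)"
proof -
  interpret M: prob_space "\<mu> a\<^sub>0" using assms(1) by (rule prob_space_action)
  have "absolutely_continuous (\<mu> a\<^sub>0) (\<mu> a)"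
    using monitoring_tech assms by (simp add: monitoring_tech_def)
  hence "KL (\<mu> a) (\<mu> a\<^sub>0) = ereal (KL_divergence (exp 1) (\<mu> a\<^sub>0) (\<mu> a))"
    by (simp add: KL_def)
  also have "KL_divergence (exp 1) (\<mu> a\<^sub>0) (\<mu> a) = (\<integral>x. lratio \<mu> a\<^sub>0 a x * log (exp 1) (lratio \<mu> a\<^sub>0 a x) \<partial>\<mu> a\<^sub>0)"
    by (subst density_lratio[OF assms]) (rule M.KL_density, auto simp: lratio_nonneg)
  finally show ?thesis by (simp add: log_def)
qed

lemma prob_space_iid: "a \<in> A \<Longrightarrow> prob_space (iid \<mu> a n)"
  unfolding iid_def by (intro prob_space_PiM prob_space_action)

lemma sets_iid: "a \<in> A \<Longrightarrow> b \<in> A \<Longrightarrow> sets (iid \<mu> a n) = sets (iid \<mu> b n)"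
  unfolding iid_def by (intro sets_PiM_cong refl sets_action)

lemma space_iid: "a \<in> A \<Longrightarrow> b \<in> A \<Longrightarrow> space (iid \<mu> a n) = space (iid \<mu> b n)"
  using sets_iid by (rule sets_eq_imp_space_eq)

lemma iid_eq_density:
  assumes "a\<^sub>0 \<in> A" "a \<in> A"
  shows "iid \<mu> a n = density (iid \<mu> a\<^sub>0 n) (\<lambda>x. ennreal (\<Prod>i<n. lratio \<mu> a\<^sub>0 a (x i)))"
proof -
  interpret likelihood_ratio "\<mu> a\<^sub>0" "lratio \<mu> a\<^sub>0 a" using assms by (rule likelihood_ratio)
  have "prob_space (density (\<mu> a\<^sub>0) (\<lambda>x. ennreal (lratio \<mu> a\<^sub>0 a x)))"
    using prob_space_action[OF assms(2)] density_lratio[OF assms] by simp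
  thus ?thesis unfolding iid_def
    by (subst density_lratio[OF assms], intro PiM_density)
       (auto simp: lratio_nonneg prob_space_imp_sigma_finite sigma_finite_measure_axioms)
qed

lemma lratio_test_set:
  fixes T :: real and Am :: "'a set" and a\<^sub>0 :: 'a and n :: nat
  defines "S \<equiv> (\<Inter>a\<in>Am. {x \<in> space (iid \<mu> a\<^sub>0 n). (\<Prod>i<n. lratio \<mu> a\<^sub>0 a (x i)) \<le> T})"
  assumes "a\<^sub>0 \<in> A" "Am \<subseteq> A" "finite Am" "Am \<noteq> {}" "0 < T"
  shows "S \<in> sets (iid \<mu> a\<^sub>0 n)" and "1 - measure (iid \<mu> a\<^sub>0 n) S \<le> card Am / T"
proof -
  let ?P = "iid \<mu> a\<^sub>0 n"
  interpret P: prob_space ?P using assms(2) by (rule prob_space_iid)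
  have sets_le [measurable]: "{x \<in> space ?P. (\<Prod>i<n. lratio \<mu> a\<^sub>0 a (x i)) \<le> T} \<in> sets ?P" for a
    unfolding iid_def by measurable
  show S: "S \<in> sets ?P" unfolding S_def using assms(4,5) by (intro sets.finite_INT) auto
  have "space ?P - S = (\<Union>a\<in>Am. {x \<in> space ?P. T < (\<Prod>i<n. lratio \<mu> a\<^sub>0 a (x i))})"
    using assms(5) by (auto simp: S_def not_le) (meson not_le)
  hence "measure ?P (space ?P - S) \<le> (\<Sum>a\<in>Am. measure ?P {x \<in> space ?P. T < (\<Prod>i<n. lratio \<mu> a\<^sub>0 a (x i))})"
    using assms(4) by (simp, intro P.finite_measure_subadditive_finite) (auto simp: iid_def)
  also have "\<dots> \<le> (\<Sum>a\<in>Am. 1 / T)"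
  proof (rule sum_mono)
    fix a assume "a \<in> Am"
    then interpret likelihood_ratio "\<mu> a\<^sub>0" "lratio \<mu> a\<^sub>0 a" using assms(2,3) by (intro likelihood_ratio) auto
    show "measure ?P {x \<in> space ?P. T < (\<Prod>i<n. lratio \<mu> a\<^sub>0 a (x i))} \<le> 1 / T"
      unfolding iid_def by (rule prob_prod_gt_le) (use assms(6) in auto)
  qed
  finally show "1 - measure ?P S \<le> card Am / T" using P.prob_compl[OF S] by simp
qed

lemma obtain_threshold_rate:
  assumes "a\<^sub>0 \<in> A" "a \<in> A" and KL: "\<tau> < (\<integral>x. lratio \<mu> a\<^sub>0 a x * ln (lratio \<mu> a\<^sub>0 a x) \<partial>\<mu> a\<^sub>0)"
  obtains \<rho> where "0 \<le> \<rho>" "\<rho> < 1"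
    "\<And>n S. S \<in> sets (iid \<mu> a\<^sub>0 n) \<Longrightarrow> (\<And>x. x \<in> S \<Longrightarrow> (\<Prod>i<n. lratio \<mu> a\<^sub>0 a (x i)) \<le> exp (\<tau> * n)) \<Longrightarrow>
       measure (iid \<mu> a n) S \<le> \<rho> ^ n"
proof -
  interpret likelihood_ratio "\<mu> a\<^sub>0" "lratio \<mu> a\<^sub>0 a" using assms(1,2) by (rule likelihood_ratio)
  obtain \<beta> where \<beta>: "0 < \<beta>" "\<beta> < 1" "(\<integral>x. lratio \<mu> a\<^sub>0 a x powr (1 - \<beta>) \<partial>\<mu> a\<^sub>0) < exp (- \<beta> * \<tau>)"
    using obtain_lower_moment_lt_exp[OF KL] by blast
  define \<rho> where "\<rho> = exp (\<beta> * \<tau>) * (\<integral>x. lratio \<mu> a\<^sub>0 a x powr (1 - \<beta>) \<partial>\<mu> a\<^sub>0)"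
  have "0 \<le> \<rho>" "\<rho> < 1"
    using \<beta>(3) mult_strict_left_mono[of _ "exp (- \<beta> * \<tau>)" "exp (\<beta> * \<tau>)"]
    by (auto simp: \<rho>_def lratio_nonneg integral_nonneg_AE simp flip: exp_add)
  moreover have "measure (iid \<mu> a n) S \<le> \<rho> ^ n"
    if S: "S \<in> sets (iid \<mu> a\<^sub>0 n)" and le: "\<And>x. x \<in> S \<Longrightarrow> (\<Prod>i<n. lratio \<mu> a\<^sub>0 a (x i)) \<le> exp (\<tau> * n)" for n S
  proof -
    have "iid \<mu> a n = density (PiM {..<n} (\<lambda>_. \<mu> a\<^sub>0)) (\<lambda>x. ennreal (\<Prod>i\<in>{..<n}. lratio \<mu> a\<^sub>0 a (x i)))"
      using iid_eq_density[OF assms(1,2)] by (simp add: iid_def)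
    moreover have "measure (density (PiM {..<n} (\<lambda>_. \<mu> a\<^sub>0)) (\<lambda>x. ennreal (\<Prod>i\<in>{..<n}. lratio \<mu> a\<^sub>0 a (x i)))) S
        \<le> exp (\<tau> * n) powr \<beta> * (\<integral>x. lratio \<mu> a\<^sub>0 a x powr (1 - \<beta>) \<partial>\<mu> a\<^sub>0) ^ card {..<n}"
      using S le \<beta>(1,2) by (intro measure_density_prod_le) (auto simp: iid_def)
    moreover have "exp (\<tau> * n) powr \<beta> = exp (\<beta> * \<tau>) ^ n"
      by (simp add: powr_def exp_of_nat_mult[symmetric] algebra_simps)
    ultimately show ?thesis by (simp add: \<rho>_def power_mult_distrib)
  qed
  ultimately show ?thesis using that by blast
qed
end

locale utility =
  fixes wl :: real and u u' u'' :: "real \<Rightarrow> real"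
  assumes has_derivative_u: "\<And>w. wl \<le> w \<Longrightarrow> (u has_real_derivative u' w) (at w within {wl..})"
    and has_derivative_u': "\<And>w. wl \<le> w \<Longrightarrow> (u' has_real_derivative u'' w) (at w within {wl..})"
    and u'_pos: "\<And>w. wl \<le> w \<Longrightarrow> 0 < u' w"
    and u''_neg: "\<And>w. wl \<le> w \<Longrightarrow> u'' w < 0"
    and continuous_u'': "continuous_on {wl..} u''"
begin

lemma u_less: "wl \<le> x \<Longrightarrow> x < y \<Longrightarrow> u x < u y"
proof -
  assume "wl \<le> x" "x < y"
  then obtain z where "x < z" "u y - u x = u' z * (y - x)"
    using mvt_within[OF \<open>x < y\<close>, of "{wl..}" u u'] has_derivative_u by force
  moreover have "0 < u' z * (y - x)"
    using u'_pos[of z] \<open>wl \<le> x\<close> \<open>x < y\<close> \<open>x < z\<close> by simp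
  ultimately show ?thesis by linarith
qed

lemma u_mono: "wl \<le> x \<Longrightarrow> x \<le> y \<Longrightarrow> u x \<le> u y"
  using u_less by (cases "x = y") (auto simp: order_le_less)

lemma u'_antimono: "wl \<le> x \<Longrightarrow> x \<le> y \<Longrightarrow> u' y \<le> u' x"
proof -
  assume "wl \<le> x" "x \<le> y"
  show ?thesis
  proof (cases "x = y")
    case False
    with \<open>x \<le> y\<close> have "x < y" by simp
    then obtain z where "x < z" "u' y - u' x = u'' z * (y - x)"
      using mvt_within[of x y "{wl..}" u' u''] has_derivative_u' \<open>wl \<le> x\<close> by force
    moreover have "u'' z * (y - x) \<le> 0"
      using u''_neg[of z] \<open>wl \<le> x\<close> \<open>x < y\<close> \<open>x < z\<close> by (intro mult_nonpos_nonneg) auto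
    ultimately show ?thesis by linarith
  qed simp
qed

lemma u_le_tangent: "wl \<le> x \<Longrightarrow> wl \<le> y \<Longrightarrow> u y \<le> u x + u' x * (y - x)"
  by (rule concave_le_tangent[of "{wl..}" u u' u'']) (use has_derivative_u has_derivative_u' u''_neg in \<open>auto simp: less_imp_le\<close>)

lemma continuous_on_u: "continuous_on {wl..} u"
proof -
  have "continuous (at x within {wl..}) u" if "x \<in> {wl..}" for x
    using has_derivative_u[of x] that DERIV_continuous by auto
  thus ?thesis by (simp add: continuous_on_eq_continuous_within)
qed

lemma obtain_strong_concavity:
  assumes "wl < w\<^sub>0"
  obtains m where "0 < m" "\<And>w. wl \<le> w \<Longrightarrow> u w \<le> u w\<^sub>0 + u' w\<^sub>0 * (w - w\<^sub>0) - m * (min (w - w\<^sub>0) 0)\<^sup>2"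
proof -
  have "continuous_on {wl..w\<^sub>0} u''" using continuous_u'' by (rule continuous_on_subset) auto
  then obtain z where z: "z \<in> {wl..w\<^sub>0}" "\<And>y. y \<in> {wl..w\<^sub>0} \<Longrightarrow> u'' y \<le> u'' z"
    using continuous_attains_sup[of "{wl..w\<^sub>0}" u''] assms by auto
  define m where "m = - u'' z / 2"
  have "0 < m" using u''_neg[of z] z by (simp add: m_def)
  have "u w \<le> u w\<^sub>0 + u' w\<^sub>0 * (w - w\<^sub>0) - m * (w - w\<^sub>0)\<^sup>2" if "wl \<le> w" "w \<le> w\<^sub>0" for w
  proof -
    let ?g = "\<lambda>w. u w + m * (w - w\<^sub>0)\<^sup>2"
    have "?g w \<le> ?g w\<^sub>0 + (u' w\<^sub>0 + 2 * m * (w\<^sub>0 - w\<^sub>0)) * (w - w\<^sub>0)"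
    proof (rule concave_le_tangent[where S = "{wl..w\<^sub>0}" and g' = "\<lambda>x. u' x + 2 * m * (x - w\<^sub>0)"
          and g'' = "\<lambda>x. u'' x + 2 * m"])
      fix x assume x: "x \<in> {wl..w\<^sub>0}"
      show "(?g has_real_derivative u' x + 2 * m * (x - w\<^sub>0)) (at x within {wl..w\<^sub>0})"
        using has_derivative_u[of x] x
        by (auto intro!: derivative_eq_intros intro: has_field_derivative_subset simp: power2_eq_square algebra_simps)
      show "((\<lambda>x. u' x + 2 * m * (x - w\<^sub>0)) has_real_derivative u'' x + 2 * m) (at x within {wl..w\<^sub>0})"
        using has_derivative_u'[of x] x
        by (auto intro!: derivative_eq_intros intro: has_field_derivative_subset)
      show "u'' x + 2 * m \<le> 0" using z(2)[OF x] by (simp add: m_def)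
    qed (use that assms in auto)
    thus ?thesis by simp
  qed
  moreover have "u w \<le> u w\<^sub>0 + u' w\<^sub>0 * (w - w\<^sub>0)" if "w\<^sub>0 \<le> w" for w
    using u_le_tangent[of w\<^sub>0 w] that assms by simp
  ultimately show ?thesis
    by (intro that[OF \<open>0 < m\<close>]) (auto simp: min_def)
qed

lemma shortfall_le:
  assumes "wl \<le> w" "wl < w\<^sub>0"
  shows "max (u w\<^sub>0 - u w) 0 \<le> u' wl * (- min (w - w\<^sub>0) 0)"
proof (cases "w \<le> w\<^sub>0")
  case True
  have "u w\<^sub>0 \<le> u w + u' w * (w\<^sub>0 - w)" using u_le_tangent[of w w\<^sub>0] assms by simp
  moreover have "u' w * (w\<^sub>0 - w) \<le> u' wl * (w\<^sub>0 - w)"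
    using True assms u'_antimono[of wl w] by (intro mult_right_mono) auto
  moreover have "0 \<le> u' wl * (w\<^sub>0 - w)" using True u'_pos[of wl] by simp
  ultimately show ?thesis using True by (simp add: min_def)
next
  case False
  thus ?thesis using u_less[of w\<^sub>0 w] assms by (simp add: min_def)
qed

lemma integral_u_le_strong_concavity:
  assumes "prob_space P" and [measurable]: "w \<in> borel_measurable P"
    and "\<And>x. x \<in> space P \<Longrightarrow> wl \<le> w x" "integrable P w" "integrable P (\<lambda>x. u (w x))" "wl < w\<^sub>0"
    and m: "\<And>w. wl \<le> w \<Longrightarrow> u w \<le> u w\<^sub>0 + u' w\<^sub>0 * (w - w\<^sub>0) - m * (min (w - w\<^sub>0) 0)\<^sup>2"
  shows "(\<integral>x. u (w x) \<partial>P) \<le> u w\<^sub>0 + u' w\<^sub>0 * ((\<integral>x. w x \<partial>P) - w\<^sub>0) - m * (\<integral>x. (min (w x - w\<^sub>0) 0)\<^sup>2 \<partial>P)"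
proof -
  interpret prob_space P by fact
  have sq: "integrable P (\<lambda>x. (min (w x - w\<^sub>0) 0)\<^sup>2)"
    using assms(1-3,6) by (intro integrable_min_diff_sq) auto
  have "(\<integral>x. u (w x) \<partial>P) \<le> (\<integral>x. u w\<^sub>0 + u' w\<^sub>0 * (w x - w\<^sub>0) - m * (min (w x - w\<^sub>0) 0)\<^sup>2 \<partial>P)"
    using assms(3-5) sq m by (intro integral_mono) auto
  also have "\<dots> = u w\<^sub>0 + u' w\<^sub>0 * ((\<integral>x. w x \<partial>P) - w\<^sub>0) - m * (\<integral>x. (min (w x - w\<^sub>0) 0)\<^sup>2 \<partial>P)"
    using assms(4) sq prob_space by (simp add: algebra_simps)
  finally show ?thesis .
qed

lemma integral_shortfall_sq_le:
  assumes "prob_space P" and [measurable]: "w \<in> borel_measurable P" "(\<lambda>x. u (w x)) \<in> borel_measurable P"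
    and w: "\<And>x. x \<in> space P \<Longrightarrow> wl \<le> w x" and "wl < w\<^sub>0"
  shows "(\<integral>x. (max (u w\<^sub>0 - u (w x)) 0)\<^sup>2 \<partial>P) \<le> (u' wl)\<^sup>2 * (\<integral>x. (min (w x - w\<^sub>0) 0)\<^sup>2 \<partial>P)"
proof -
  interpret prob_space P by fact
  have "(\<integral>x. (max (u w\<^sub>0 - u (w x)) 0)\<^sup>2 \<partial>P) \<le> (\<integral>x. (u' wl)\<^sup>2 * (min (w x - w\<^sub>0) 0)\<^sup>2 \<partial>P)"
  proof (rule integral_mono)
    show "integrable P (\<lambda>x. (max (u w\<^sub>0 - u (w x)) 0)\<^sup>2)"
      using w u_mono[of wl] \<open>wl < w\<^sub>0\<close> by (intro integrable_const_bound[where B = "(u w\<^sub>0 - u wl)\<^sup>2"] AE_I2)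
        (auto intro!: power_mono)
    show "integrable P (\<lambda>x. (u' wl)\<^sup>2 * (min (w x - w\<^sub>0) 0)\<^sup>2)"
      using integrable_min_diff_sq[OF prob_space_axioms _ w] \<open>wl < w\<^sub>0\<close> by simp
    fix x assume "x \<in> space P"
    hence "max (u w\<^sub>0 - u (w x)) 0 \<le> u' wl * (- min (w x - w\<^sub>0) 0)"
      using shortfall_le[OF w \<open>wl < w\<^sub>0\<close>] by simp
    hence "(max (u w\<^sub>0 - u (w x)) 0)\<^sup>2 \<le> (u' wl * (- min (w x - w\<^sub>0) 0))\<^sup>2" by (intro power_mono) auto
    thus "(max (u w\<^sub>0 - u (w x)) 0)\<^sup>2 \<le> (u' wl)\<^sup>2 * (min (w x - w\<^sub>0) 0)\<^sup>2" by (simp add: power_mult_distrib)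
  qed
  thus ?thesis by simp
qed

end

lemma C_SB_le_C_bin: "C_SB wl u c A astar \<mu> n \<le> C_bin wl u c A astar \<mu> n"
  unfolding C_SB_def C_bin_def by (rule Inf_superset_mono) auto

lemma C_bin_le_cost:
  assumes "contract_ok wl u c A astar \<mu> n w" "card (w ` space (iid \<mu> astar n)) = 2"
  shows "C_bin wl u c A astar \<mu> n \<le> ereal (\<integral>x. w x \<partial>iid \<mu> astar n)"
  unfolding C_bin_def by (rule Inf_lower) (use assms in blast)

lemma le_C_SB:
  assumes "\<And>w. contract_ok wl u c A astar \<mu> n w \<Longrightarrow> b \<le> (\<integral>x. w x \<partial>iid \<mu> astar n)"
  shows "ereal b \<le> C_SB wl u c A astar \<mu> n"
  unfolding C_SB_def by (rule Inf_greatest) (use assms in auto)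

locale principal_agent = utility wl u u' u'' for wl u u' u'' +
  fixes c :: "'a \<Rightarrow> real" and A :: "'a set" and astar :: 'a and w\<^sub>0 :: real
  assumes finite_A: "finite A" and astar_in_A: "astar \<in> A"
    and wl_less_w0: "wl < w\<^sub>0" and u_w0: "u w\<^sub>0 = c astar"
    and u_wl_less_c: "\<And>a. a \<in> A \<Longrightarrow> u wl < c a"
    and c_neq: "\<And>a. a \<in> A \<Longrightarrow> a \<noteq> astar \<Longrightarrow> c a \<noteq> c astar"
begin

lemma spread_lower_bound:
  fixes \<mu> :: "'a \<Rightarrow> 'x::euclidean_space measure" and X :: "'x set"
  assumes mt: "monitoring_tech X A \<mu>" and a: "a \<in> A" "c a < c astar" and "0 < \<gamma>"
    and tail: "(c astar - u wl) / exp (s * n) powr \<gamma> * (\<integral>x. lratio \<mu> astar a x powr (1 + \<gamma>) \<partial>\<mu> astar) ^ n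
                 < (c astar - c a) / 8"
    and w: "contract_ok wl u c A astar \<mu> n w"
    and low: "(\<integral>x. u (w x) \<partial>iid \<mu> astar n) - c astar < (c astar - c a) / 2"
  shows "(c astar - c a)\<^sup>2 / (8 * (u' wl)\<^sup>2 * exp (s * n)) < (\<integral>x. (min (w x - w\<^sub>0) 0)\<^sup>2 \<partial>iid \<mu> astar n)"
proof -
  interpret monitoring X A \<mu> by (rule monitoring.intro[OF mt])
  interpret L: likelihood_ratio "\<mu> astar" "lratio \<mu> astar a" using astar_in_A a(1) by (rule likelihood_ratio)
  let ?P = "iid \<mu> astar n" and ?Q = "iid \<mu> a n"
  interpret P: prob_space ?P using astar_in_A by (rule prob_space_iid)
  interpret Q: prob_space ?Q using a(1) by (rule prob_space_iid)
  define \<Delta> where "\<Delta> = c astar - c a"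
  from w have w_meas [measurable]: "w \<in> borel_measurable ?P" and w_ge: "\<And>x. x \<in> space ?P \<Longrightarrow> wl \<le> w x"
    and int_uP: "integrable ?P (\<lambda>x. u (w x))" and int_uQ: "integrable ?Q (\<lambda>x. u (w x))"
    and IC: "(\<integral>x. u (w x) \<partial>?Q) - c a \<le> (\<integral>x. u (w x) \<partial>?P) - c astar"
    using astar_in_A a(1) by (auto simp: contract_ok_def)
  have uw_meas [measurable]: "(\<lambda>x. u (w x)) \<in> borel_measurable ?P" using int_uP by auto
  define f where "f x = max (c astar - u (w x)) 0" for x
  have f_meas [measurable]: "f \<in> borel_measurable ?P" unfolding f_def by measurable
  have f_bounds: "0 \<le> f x \<and> f x \<le> c astar - u wl" if "x \<in> space ?P" for x
    using u_mono[OF order_refl w_ge[OF that]] u_wl_less_c[OF astar_in_A] by (auto simp: f_def)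
  have "\<Delta> / 2 < (\<integral>x. f x \<partial>?Q)"
  proof -
    have "integrable ?Q f"
      using f_bounds space_iid[OF a(1) astar_in_A]
      by (intro Q.integrable_const_bound[where B = "c astar - u wl"] AE_I2)
         (auto simp: measurable_cong_sets[OF sets_iid[OF a(1) astar_in_A] refl])
    hence "(\<integral>x. c astar - u (w x) \<partial>?Q) \<le> (\<integral>x. f x \<partial>?Q)"
      using int_uQ by (intro integral_mono) (auto simp: f_def)
    thus ?thesis using IC low int_uQ Q.prob_space by (simp add: \<Delta>_def)
  qed
  moreover have "?Q = density (PiM {..<n} (\<lambda>_. \<mu> astar)) (\<lambda>x. ennreal (\<Prod>i\<in>{..<n}. lratio \<mu> astar a (x i)))"
    using iid_eq_density[OF astar_in_A a(1)] by (simp add: iid_def)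
  ultimately have "\<Delta>\<^sup>2 / (8 * exp (s * n)) < (\<integral>x. (f x)\<^sup>2 \<partial>PiM {..<n} (\<lambda>_. \<mu> astar))"
    using f_meas f_bounds tail \<open>0 < \<gamma>\<close> a(2)
    by (intro L.integral_sq_gt_of_integral_density_gt[where B = "c astar - u wl"])
      (auto simp: iid_def \<Delta>_def)
  also have "\<dots> = (\<integral>x. (max (u w\<^sub>0 - u (w x)) 0)\<^sup>2 \<partial>?P)" by (simp add: f_def u_w0 iid_def)
  also have "\<dots> \<le> (u' wl)\<^sup>2 * (\<integral>x. (min (w x - w\<^sub>0) 0)\<^sup>2 \<partial>?P)"
    by (rule integral_shortfall_sq_le[OF P.prob_space_axioms w_meas uw_meas w_ge wl_less_w0])
  finally show ?thesis using u'_pos[of wl] by (simp add: \<Delta>_def field_simps)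
qed

text \<open>Either the agent's expected utility exceeds \<open>c a\<^sup>*\<close> by \<open>\<Delta>/2\<close>, which concavity prices at
  \<open>\<Delta> / (2 u' w\<^sub>0)\<close>, or incentive compatibility against \<open>a\<close> forces the spread below \<open>w\<^sub>0\<close>,
  which strong concavity prices at a multiple of \<open>e\<^sup>-\<^sup>s\<^sup>n\<close>.\<close>

lemma cost_lower_bound:
  fixes \<mu> :: "'a \<Rightarrow> 'x::euclidean_space measure" and X :: "'x set"
  assumes mt: "monitoring_tech X A \<mu>" and a: "a \<in> A" "c a < c astar"
    and m: "0 < m" "\<And>w. wl \<le> w \<Longrightarrow> u w \<le> u w\<^sub>0 + u' w\<^sub>0 * (w - w\<^sub>0) - m * (min (w - w\<^sub>0) 0)\<^sup>2"
    and "0 < \<gamma>"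
    and tail: "(c astar - u wl) / exp (s * n) powr \<gamma> * (\<integral>x. lratio \<mu> astar a x powr (1 + \<gamma>) \<partial>\<mu> astar) ^ n
                 < (c astar - c a) / 8"
    and w: "contract_ok wl u c A astar \<mu> n w"
  shows "w\<^sub>0 + min ((c astar - c a) / (2 * u' w\<^sub>0))
            (m * (c astar - c a)\<^sup>2 / (8 * (u' wl)\<^sup>2 * u' w\<^sub>0) * exp (- s * n))
           \<le> (\<integral>x. w x \<partial>iid \<mu> astar n)"
proof -
  let ?P = "iid \<mu> astar n"
  interpret P: prob_space ?P using astar_in_A by (rule monitoring.prob_space_iid[OF monitoring.intro[OF mt]])
  define \<Delta> where "\<Delta> = c astar - c a"
  have "0 < u' w\<^sub>0" using u'_pos wl_less_w0 by simp
  from w have [measurable]: "w \<in> borel_measurable ?P" and w_ge: "\<And>x. x \<in> space ?P \<Longrightarrow> wl \<le> w x"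
    and int_w: "integrable ?P w" and int_uP: "integrable ?P (\<lambda>x. u (w x))"
    and IR: "c astar \<le> (\<integral>x. u (w x) \<partial>?P)"
    using astar_in_A by (auto simp: contract_ok_def)
  define d where "d = (\<integral>x. (min (w x - w\<^sub>0) 0)\<^sup>2 \<partial>?P)"
  have "0 \<le> d" unfolding d_def by (intro integral_nonneg_AE) auto
  have cost: "(\<integral>x. u (w x) \<partial>?P) - c astar + m * d \<le> u' w\<^sub>0 * ((\<integral>x. w x \<partial>?P) - w\<^sub>0)"
    using integral_u_le_strong_concavity[OF P.prob_space_axioms _ w_ge int_w int_uP wl_less_w0 m(2)] u_w0
    unfolding d_def by simp
  show ?thesis
  proof (cases "\<Delta> / 2 \<le> (\<integral>x. u (w x) \<partial>?P) - c astar")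
    case True
    with cost \<open>0 \<le> d\<close> m(1) have "\<Delta> / 2 \<le> u' w\<^sub>0 * ((\<integral>x. w x \<partial>?P) - w\<^sub>0)"
      by (smt (verit) mult_nonneg_nonneg)
    hence "\<Delta> / (2 * u' w\<^sub>0) \<le> (\<integral>x. w x \<partial>?P) - w\<^sub>0"
      using \<open>0 < u' w\<^sub>0\<close> by (simp add: field_simps)
    thus ?thesis unfolding \<Delta>_def by linarith
  next
    case False
    hence "\<Delta>\<^sup>2 / (8 * (u' wl)\<^sup>2 * exp (s * n)) < d"
      using spread_lower_bound[OF mt a \<open>0 < \<gamma>\<close> tail w] by (simp add: d_def \<Delta>_def)
    hence "m * (\<Delta>\<^sup>2 / (8 * (u' wl)\<^sup>2 * exp (s * n))) < u' w\<^sub>0 * ((\<integral>x. w x \<partial>?P) - w\<^sub>0)"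
      using cost IR m(1) by (smt (verit) mult_strict_left_mono)
    hence "m * (\<Delta>\<^sup>2 / (8 * (u' wl)\<^sup>2 * exp (s * n))) / u' w\<^sub>0 < (\<integral>x. w x \<partial>?P) - w\<^sub>0"
      using \<open>0 < u' w\<^sub>0\<close> by (metis pos_divide_less_eq mult.commute)
    moreover have "m * (\<Delta>\<^sup>2 / (8 * (u' wl)\<^sup>2 * exp (s * n))) / u' w\<^sub>0
        = m * \<Delta>\<^sup>2 / (8 * (u' wl)\<^sup>2 * u' w\<^sub>0) * exp (- s * n)"
      by (simp add: exp_minus field_simps)
    ultimately show ?thesis unfolding \<Delta>_def by linarith
  qed
qed

lemma eventually_cost_lower_bound:
  fixes \<mu> :: "'a \<Rightarrow> 'x::euclidean_space measure" and X :: "'x set"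
  assumes mt: "monitoring_tech X A \<mu>" and a: "a \<in> A" "c a < c astar"
    and KL: "(\<integral>x. lratio \<mu> astar a x * ln (lratio \<mu> astar a x) \<partial>\<mu> astar) < s"
  obtains D C where "0 < D" "0 < C"
    "\<forall>\<^sub>F n in sequentially. \<forall>w. contract_ok wl u c A astar \<mu> n w \<longrightarrow>
       w\<^sub>0 + min D (C * exp (- s * n)) \<le> (\<integral>x. w x \<partial>iid \<mu> astar n)"
proof -
  interpret monitoring X A \<mu> by (rule monitoring.intro[OF mt])
  interpret L: likelihood_ratio "\<mu> astar" "lratio \<mu> astar a" using astar_in_A a(1) by (rule likelihood_ratio)
  obtain \<gamma> where \<gamma>: "0 < \<gamma>" "(\<integral>x. lratio \<mu> astar a x powr (1 + \<gamma>) \<partial>\<mu> astar) < exp (\<gamma> * s)"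
    using L.obtain_higher_moment_lt_exp[OF KL] .
  obtain m where m: "0 < m" "\<And>w. wl \<le> w \<Longrightarrow> u w \<le> u w\<^sub>0 + u' w\<^sub>0 * (w - w\<^sub>0) - m * (min (w - w\<^sub>0) 0)\<^sup>2"
    using obtain_strong_concavity[OF wl_less_w0] by blast
  define r where "r = (\<integral>x. lratio \<mu> astar a x powr (1 + \<gamma>) \<partial>\<mu> astar) / exp (\<gamma> * s)"
  have "0 \<le> r" "r < 1" using \<gamma>(2) by (auto simp: r_def lratio_nonneg integral_nonneg_AE)
  have tail: "(c astar - u wl) / exp (s * n) powr \<gamma> * (\<integral>x. lratio \<mu> astar a x powr (1 + \<gamma>) \<partial>\<mu> astar) ^ n
      = (c astar - u wl) * r ^ n" for n :: nat
    by (simp add: r_def powr_def power_divide exp_of_nat_mult[symmetric] algebra_simps)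
  have "(\<lambda>n. (c astar - u wl) * r ^ n) \<longlonglongrightarrow> 0"
    using \<open>0 \<le> r\<close> \<open>r < 1\<close> by (intro tendsto_mult_right_zero LIMSEQ_power_zero) auto
  hence "\<forall>\<^sub>F n in sequentially. (c astar - u wl) * r ^ n < (c astar - c a) / 8"
    using a(2) by (intro order_tendstoD(2)) auto
  hence "\<forall>\<^sub>F n in sequentially. \<forall>w. contract_ok wl u c A astar \<mu> n w \<longrightarrow>
      w\<^sub>0 + min ((c astar - c a) / (2 * u' w\<^sub>0)) (m * (c astar - c a)\<^sup>2 / (8 * (u' wl)\<^sup>2 * u' w\<^sub>0) * exp (- s * n))
        \<le> (\<integral>x. w x \<partial>iid \<mu> astar n)"
  proof (eventually_elim, intro allI impI)
    fix n w
    assume "(c astar - u wl) * r ^ n < (c astar - c a) / 8" "contract_ok wl u c A astar \<mu> n w"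
    thus "w\<^sub>0 + min ((c astar - c a) / (2 * u' w\<^sub>0)) (m * (c astar - c a)\<^sup>2 / (8 * (u' wl)\<^sup>2 * u' w\<^sub>0) * exp (- s * n))
        \<le> (\<integral>x. w x \<partial>iid \<mu> astar n)"
      by (intro cost_lower_bound[OF mt a m \<gamma>(1)]) (unfold tail)
  qed
  moreover have "0 < (c astar - c a) / (2 * u' w\<^sub>0)" "0 < m * (c astar - c a)\<^sup>2 / (8 * (u' wl)\<^sup>2 * u' w\<^sub>0)"
    using a(2) m(1) u'_pos[of wl] u'_pos[of w\<^sub>0] wl_less_w0 by simp_all
  ultimately show ?thesis using that by blast
qed

lemma binary_participation:
  assumes "1/2 \<le> p" "p \<le> 1" "wH = w\<^sub>0 + 2 * (c astar - u wl) / u' (w\<^sub>0 + 1) * (1 - p)" "wH \<le> w\<^sub>0 + 1"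
  shows "c astar - u wl \<le> u wH - u wl" and "c astar \<le> u wl + (u wH - u wl) * p"
proof -
  define B where "B = c astar - u wl"
  have "0 < B" using u_wl_less_c[OF astar_in_A] by (simp add: B_def)
  have "0 < u' (w\<^sub>0 + 1)" using u'_pos wl_less_w0 by simp
  have "w\<^sub>0 \<le> wH" using assms \<open>0 < B\<close> \<open>0 < u' (w\<^sub>0 + 1)\<close> by (simp add: B_def)
  have "u w\<^sub>0 \<le> u wH + u' wH * (w\<^sub>0 - wH)" using u_le_tangent[of wH w\<^sub>0] \<open>w\<^sub>0 \<le> wH\<close> wl_less_w0 by simp
  moreover have "u' (w\<^sub>0 + 1) * (wH - w\<^sub>0) \<le> u' wH * (wH - w\<^sub>0)"
    using u'_antimono[of wH "w\<^sub>0 + 1"] assms(4) \<open>w\<^sub>0 \<le> wH\<close> wl_less_w0 by (intro mult_right_mono) auto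
  moreover have "u' (w\<^sub>0 + 1) * (wH - w\<^sub>0) = 2 * B * (1 - p)"
    using assms(3) \<open>0 < u' (w\<^sub>0 + 1)\<close> by (simp add: B_def)
  ultimately have gap: "B + 2 * B * (1 - p) \<le> u wH - u wl" using u_w0 by (simp add: B_def algebra_simps)
  moreover have "0 \<le> 2 * B * (1 - p)" using \<open>0 < B\<close> assms(2) by simp
  ultimately show "c astar - u wl \<le> u wH - u wl" unfolding B_def by linarith
  have "0 \<le> B * ((2 * p - 1) * (1 - p))" using \<open>0 < B\<close> assms(1,2) by (intro mult_nonneg_nonneg) auto
  moreover have "(B + 2 * B * (1 - p)) * p - B = B * ((2 * p - 1) * (1 - p))" by (simp add: algebra_simps)
  ultimately have "B \<le> (B + 2 * B * (1 - p)) * p" by linarith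
  also have "\<dots> \<le> (u wH - u wl) * p" using gap assms(1) by (intro mult_right_mono) auto
  finally show "c astar \<le> u wl + (u wH - u wl) * p" by (simp add: B_def)
qed

lemma binary_incentive:
  assumes "b \<in> A" "0 \<le> q" "q \<le> 1" "p \<le> 1" "1 - p \<le> \<epsilon>" "b = astar \<Longrightarrow> q = p"
    and gap: "c astar - u wl \<le> u wH - u wl" "u wH \<le> u (w\<^sub>0 + 1)"
    and below: "c b < c astar \<Longrightarrow> \<epsilon> + q \<le> (c b - u wl) / (c astar - u wl)"
    and above: "c astar < c b \<Longrightarrow> \<epsilon> * (u (w\<^sub>0 + 1) - u wl) \<le> c b - c astar"
  shows "c astar - c b \<le> (u wH - u wl) * (p - q)"
proof -
  have "0 < c astar - u wl" using u_wl_less_c[OF astar_in_A] by simp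
  consider "c b < c astar" | "b = astar" | "c astar < c b" using c_neq[OF assms(1)] by fastforce
  then show ?thesis
  proof cases
    case 1
    have "1 - (c b - u wl) / (c astar - u wl) = (c astar - c b) / (c astar - u wl)"
      using \<open>0 < c astar - u wl\<close> by (simp add: field_simps)
    with below[OF 1] assms(5) have "(c astar - c b) / (c astar - u wl) \<le> p - q" by linarith
    hence "c astar - c b \<le> (c astar - u wl) * (p - q)"
      using \<open>0 < c astar - u wl\<close> by (simp add: pos_divide_le_eq mult.commute)
    also have "\<dots> \<le> (u wH - u wl) * (p - q)"
    proof (rule mult_right_mono[OF gap(1)])
      have "0 < (c astar - c b) / (c astar - u wl)" using 1 \<open>0 < c astar - u wl\<close> by simp
      thus "0 \<le> p - q" using \<open>(c astar - c b) / (c astar - u wl) \<le> p - q\<close> by linarith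
    qed
    finally show ?thesis .
  next
    case 3
    have "0 \<le> u wH - u wl" using gap(1) \<open>0 < c astar - u wl\<close> by linarith
    hence "(u wH - u wl) * (- \<epsilon>) \<le> (u wH - u wl) * (p - q)" using assms(3,5) by (intro mult_left_mono) auto
    moreover have "(u wH - u wl) * \<epsilon> \<le> (u (w\<^sub>0 + 1) - u wl) * \<epsilon>"
      using gap(2) assms(4,5) by (intro mult_right_mono) auto
    ultimately show ?thesis using above[OF 3] by (simp add: mult.commute)
  qed (use assms(6) in simp)
qed

lemma binary_contract_ok:
  fixes \<mu> :: "'a \<Rightarrow> 'x::euclidean_space measure" and X :: "'x set" and S :: "(nat \<Rightarrow> 'x) set" and n :: nat
  defines "wH \<equiv> w\<^sub>0 + 2 * (c astar - u wl) / u' (w\<^sub>0 + 1) * (1 - measure (iid \<mu> astar n) S)"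
  assumes mt: "monitoring_tech X A \<mu>" and S: "S \<in> sets (iid \<mu> astar n)"
    and \<epsilon>: "1 - measure (iid \<mu> astar n) S \<le> \<epsilon>" "\<epsilon> \<le> 1/2" "2 * (c astar - u wl) / u' (w\<^sub>0 + 1) * \<epsilon> \<le> 1"
    and below: "\<And>a. a \<in> A \<Longrightarrow> c a < c astar \<Longrightarrow> \<epsilon> + measure (iid \<mu> a n) S \<le> (c a - u wl) / (c astar - u wl)"
    and above: "\<And>a. a \<in> A \<Longrightarrow> c astar < c a \<Longrightarrow> \<epsilon> * (u (w\<^sub>0 + 1) - u wl) \<le> c a - c astar"
  shows "contract_ok wl u c A astar \<mu> n (\<lambda>x. wl + (wH - wl) * indicator S x)"
    and "w\<^sub>0 \<le> wH" "wH \<le> w\<^sub>0 + 2 * (c astar - u wl) / u' (w\<^sub>0 + 1) * \<epsilon>"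
proof -
  interpret monitoring X A \<mu> by (rule monitoring.intro[OF mt])
  define \<kappa> where "\<kappa> = 2 * (c astar - u wl) / u' (w\<^sub>0 + 1)"
  define q where "q b = measure (iid \<mu> b n) S" for b
  have "0 < \<kappa>" using u_wl_less_c[OF astar_in_A] u'_pos[of "w\<^sub>0 + 1"] wl_less_w0 by (simp add: \<kappa>_def)
  have q: "0 \<le> q b" "q b \<le> 1" if "b \<in> A" for b
    using prob_space.prob_le_1[OF prob_space_iid[OF that]] by (simp_all add: q_def)
  have "1/2 \<le> q astar" using \<epsilon>(1,2) by (simp add: q_def)
  have "0 \<le> \<kappa> * (1 - q astar)" using \<open>0 < \<kappa>\<close> q(2)[OF astar_in_A] by simp
  moreover have "\<kappa> * (1 - q astar) \<le> \<kappa> * \<epsilon>" using \<epsilon>(1) \<open>0 < \<kappa>\<close> by (intro mult_left_mono) (auto simp: q_def)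
  ultimately show wH: "w\<^sub>0 \<le> wH" "wH \<le> w\<^sub>0 + 2 * (c astar - u wl) / u' (w\<^sub>0 + 1) * \<epsilon>"
    by (simp_all add: wH_def \<kappa>_def q_def)
  have "wH \<le> w\<^sub>0 + 1" using wH(2) \<epsilon>(3) by simp
  note part = binary_participation[OF \<open>1/2 \<le> q astar\<close> q(2)[OF astar_in_A]
    wH_def[THEN meta_eq_to_obj_eq, folded q_def] this]
  have "u wH \<le> u (w\<^sub>0 + 1)" using u_mono \<open>wH \<le> w\<^sub>0 + 1\<close> wH(1) wl_less_w0 by simp
  have u_w: "u (wl + (wH - wl) * indicator S x) = u wl + (u wH - u wl) * indicator S x" for x
    by (simp add: indicator_def)
  have int_u: "integrable (iid \<mu> b n) (\<lambda>x. u (wl + (wH - wl) * indicator S x))"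
    "(\<integral>x. u (wl + (wH - wl) * indicator S x) \<partial>iid \<mu> b n) = u wl + (u wH - u wl) * q b" if "b \<in> A" for b
    using integral_affine_indicator[OF prob_space_iid[OF that]] S sets_iid[OF that astar_in_A]
    unfolding u_w q_def by auto
  have IC: "(\<integral>x. u (wl + (wH - wl) * indicator S x) \<partial>iid \<mu> b n) - c b
      \<le> (\<integral>x. u (wl + (wH - wl) * indicator S x) \<partial>iid \<mu> astar n) - c astar" if "b \<in> A" for b
  proof -
    have "c astar - c b \<le> (u wH - u wl) * (q astar - q b)"
      using that q[OF that] q(2)[OF astar_in_A] \<epsilon>(1) part(1) \<open>u wH \<le> u (w\<^sub>0 + 1)\<close> below[OF that] above[OF that]
      by (intro binary_incentive) (auto simp: q_def)
    thus ?thesis using int_u(2)[OF that] int_u(2)[OF astar_in_A] by (simp add: algebra_simps)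
  qed
  have "integrable (iid \<mu> astar n) (\<lambda>x. wl + (wH - wl) * indicator S x)"
    by (rule integral_affine_indicator(1)[OF prob_space_iid[OF astar_in_A] S])
  with int_u(1) IC part(2) int_u(2)[OF astar_in_A] wH(1) wl_less_w0 astar_in_A
  show "contract_ok wl u c A astar \<mu> n (\<lambda>x. wl + (wH - wl) * indicator S x)"
    unfolding contract_ok_def by (auto simp: indicator_def)
qed

lemma exists_binary_contract:
  fixes \<mu> :: "'a \<Rightarrow> 'x::euclidean_space measure" and X :: "'x set"
  assumes mt: "monitoring_tech X A \<mu>" and S: "S \<in> sets (iid \<mu> astar n)"
    and a\<^sub>0: "a\<^sub>0 \<in> A" "c a\<^sub>0 < c astar"
    and \<epsilon>: "1 - measure (iid \<mu> astar n) S \<le> \<epsilon>" "\<epsilon> \<le> 1/2" "2 * (c astar - u wl) / u' (w\<^sub>0 + 1) * \<epsilon> \<le> 1"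
    and below: "\<And>a. a \<in> A \<Longrightarrow> c a < c astar \<Longrightarrow> \<epsilon> + measure (iid \<mu> a n) S \<le> (c a - u wl) / (c astar - u wl)"
    and above: "\<And>a. a \<in> A \<Longrightarrow> c astar < c a \<Longrightarrow> \<epsilon> * (u (w\<^sub>0 + 1) - u wl) \<le> c a - c astar"
  obtains w where "contract_ok wl u c A astar \<mu> n w" "card (w ` space (iid \<mu> astar n)) = 2"
    "(\<integral>x. w x \<partial>iid \<mu> astar n) \<le> w\<^sub>0 + 2 * (c astar - u wl) / u' (w\<^sub>0 + 1) * \<epsilon>"
proof -
  interpret monitoring X A \<mu> by (rule monitoring.intro[OF mt])
  let ?P = "iid \<mu> astar n"
  interpret P: prob_space ?P using astar_in_A by (rule prob_space_iid)
  define wH where "wH = w\<^sub>0 + 2 * (c astar - u wl) / u' (w\<^sub>0 + 1) * (1 - measure ?P S)"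
  define w where "w x = wl + (wH - wl) * indicator S x" for x
  note ok = binary_contract_ok[OF mt S \<epsilon> below above, folded wH_def w_def]
  have "measure (iid \<mu> a\<^sub>0 n) S < 1"
    using below[OF a\<^sub>0] \<epsilon>(1,2) u_wl_less_c[OF a\<^sub>0(1)] a\<^sub>0(2) P.prob_le_1[of S]
    by (smt (verit, best) divide_less_eq_1_pos)
  hence "S \<noteq> space ?P"
    using prob_space.prob_space[OF prob_space_iid[OF a\<^sub>0(1)]] space_iid[OF a\<^sub>0(1) astar_in_A] by auto
  moreover have "S \<noteq> {}" using \<epsilon>(1,2) by auto
  ultimately have "card (w ` space ?P) = 2"
    unfolding w_def using S ok(2) wl_less_w0 by (intro card_image_affine_indicator sets.sets_into_space) auto
  moreover have "(\<integral>x. w x \<partial>?P) \<le> wH"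
  proof -
    have "(wH - wl) * measure ?P S \<le> wH - wl" using ok(2) wl_less_w0 by (intro mult_left_le) auto
    thus ?thesis using integral_affine_indicator(2)[OF P.prob_space_axioms S] by (simp add: w_def)
  qed
  ultimately show ?thesis using that ok(1,3) by simp
qed

lemma eventually_binary_contract_conditions:
  assumes "\<epsilon> \<longlonglongrightarrow> 0" and \<rho>: "\<And>a. a \<in> A \<Longrightarrow> c a < c astar \<Longrightarrow> 0 \<le> \<rho> a \<and> \<rho> a < 1"
  shows "\<forall>\<^sub>F n in sequentially. \<epsilon> n \<le> 1/2 \<and> 2 * (c astar - u wl) / u' (w\<^sub>0 + 1) * \<epsilon> n \<le> 1 \<and>
    (\<forall>a\<in>A. c a < c astar \<longrightarrow> \<epsilon> n + \<rho> a ^ n \<le> (c a - u wl) / (c astar - u wl)) \<and>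
    (\<forall>a\<in>A. c astar < c a \<longrightarrow> \<epsilon> n * (u (w\<^sub>0 + 1) - u wl) \<le> c a - c astar)"
proof -
  have below: "\<forall>\<^sub>F n in sequentially. c a < c astar \<longrightarrow> \<epsilon> n + \<rho> a ^ n \<le> (c a - u wl) / (c astar - u wl)"
    if "a \<in> A" for a
  proof (cases "c a < c astar")
    case True
    have "(\<lambda>n. \<epsilon> n + \<rho> a ^ n) \<longlonglongrightarrow> 0"
      using \<rho>[OF that True] tendsto_add[OF assms(1) LIMSEQ_power_zero[of "\<rho> a"]] by simp
    moreover have "0 < (c a - u wl) / (c astar - u wl)"
      using u_wl_less_c[OF that] True by (auto intro!: divide_pos_pos)
    ultimately have "\<forall>\<^sub>F n in sequentially. \<epsilon> n + \<rho> a ^ n < (c a - u wl) / (c astar - u wl)"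
      by (rule order_tendstoD(2))
    thus ?thesis by eventually_elim simp
  qed simp
  have above: "\<forall>\<^sub>F n in sequentially. c astar < c a \<longrightarrow> \<epsilon> n * (u (w\<^sub>0 + 1) - u wl) \<le> c a - c astar" for a
  proof (cases "c astar < c a")
    case True
    have "(\<lambda>n. \<epsilon> n * (u (w\<^sub>0 + 1) - u wl)) \<longlonglongrightarrow> 0" using assms(1) by (rule tendsto_mult_left_zero)
    with True have "\<forall>\<^sub>F n in sequentially. \<epsilon> n * (u (w\<^sub>0 + 1) - u wl) < c a - c astar"
      by (intro order_tendstoD(2)) auto
    thus ?thesis by eventually_elim simp
  qed simp
  have "\<forall>\<^sub>F n in sequentially. \<epsilon> n < 1/2" by (rule order_tendstoD(2)[OF assms(1)]) simp
  moreover have "\<forall>\<^sub>F n in sequentially. 2 * (c astar - u wl) / u' (w\<^sub>0 + 1) * \<epsilon> n < 1"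
    by (rule order_tendstoD(2)[OF tendsto_mult_right_zero[OF assms(1)]]) simp
  moreover have "\<forall>\<^sub>F n in sequentially. \<forall>a\<in>A. c a < c astar \<longrightarrow> \<epsilon> n + \<rho> a ^ n \<le> (c a - u wl) / (c astar - u wl)"
    using below by (intro eventually_ball_finite[OF finite_A]) auto
  moreover have "\<forall>\<^sub>F n in sequentially. \<forall>a\<in>A. c astar < c a \<longrightarrow> \<epsilon> n * (u (w\<^sub>0 + 1) - u wl) \<le> c a - c astar"
    using above by (intro eventually_ball_finite[OF finite_A]) auto
  ultimately show ?thesis by eventually_elim auto
qed

lemma eventually_binary_contract:
  fixes \<mu> :: "'a \<Rightarrow> 'x::euclidean_space measure" and X :: "'x set"
  assumes mt: "monitoring_tech X A \<mu>" and a\<^sub>0: "a\<^sub>0 \<in> A" "c a\<^sub>0 < c astar" and "0 < \<tau>"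
    and KL: "\<And>a. a \<in> A \<Longrightarrow> c a < c astar \<Longrightarrow> \<tau> < (\<integral>x. lratio \<mu> astar a x * ln (lratio \<mu> astar a x) \<partial>\<mu> astar)"
  obtains C where "\<forall>\<^sub>F n in sequentially. \<exists>w. contract_ok wl u c A astar \<mu> n w \<and>
    card (w ` space (iid \<mu> astar n)) = 2 \<and> (\<integral>x. w x \<partial>iid \<mu> astar n) \<le> w\<^sub>0 + C * exp (- \<tau> * n)"
proof -
  interpret monitoring X A \<mu> by (rule monitoring.intro[OF mt])
  define Am where "Am = {a \<in> A. c a < c astar}"
  have Am: "Am \<subseteq> A" "finite Am" "Am \<noteq> {}" using finite_A a\<^sub>0 by (auto simp: Am_def)
  have "\<exists>\<rho>. 0 \<le> \<rho> \<and> \<rho> < 1 \<and> (\<forall>n S. S \<in> sets (iid \<mu> astar n) \<longrightarrow>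
      (\<forall>x\<in>S. (\<Prod>i<n. lratio \<mu> astar a (x i)) \<le> exp (\<tau> * n)) \<longrightarrow> measure (iid \<mu> a n) S \<le> \<rho> ^ n)"
    if a: "a \<in> A" "c a < c astar" for a
  proof -
    obtain \<rho> where "0 \<le> \<rho>" "\<rho> < 1" and bound: "\<And>n S. S \<in> sets (iid \<mu> astar n) \<Longrightarrow>
        (\<And>x. x \<in> S \<Longrightarrow> (\<Prod>i<n. lratio \<mu> astar a (x i)) \<le> exp (\<tau> * n)) \<Longrightarrow> measure (iid \<mu> a n) S \<le> \<rho> ^ n"
      using obtain_threshold_rate[OF astar_in_A a(1) KL[OF a]] by blast
    show ?thesis using \<open>0 \<le> \<rho>\<close> \<open>\<rho> < 1\<close> bound by (intro exI[of _ \<rho>]) auto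
  qed
  then obtain \<rho> where \<rho>: "\<And>a. a \<in> A \<Longrightarrow> c a < c astar \<Longrightarrow> 0 \<le> \<rho> a \<and> \<rho> a < 1 \<and> (\<forall>n S. S \<in> sets (iid \<mu> astar n) \<longrightarrow>
      (\<forall>x\<in>S. (\<Prod>i<n. lratio \<mu> astar a (x i)) \<le> exp (\<tau> * n)) \<longrightarrow> measure (iid \<mu> a n) S \<le> \<rho> a ^ n)"
    by metis
  define \<epsilon> where "\<epsilon> n = card Am * exp (- \<tau> * n)" for n :: nat
  have "\<epsilon> \<longlonglongrightarrow> 0" unfolding \<epsilon>_def using \<open>0 < \<tau>\<close> by real_asymp
  with \<rho> have "\<forall>\<^sub>F n in sequentially. \<epsilon> n \<le> 1/2 \<and> 2 * (c astar - u wl) / u' (w\<^sub>0 + 1) * \<epsilon> n \<le> 1 \<and>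
    (\<forall>a\<in>A. c a < c astar \<longrightarrow> \<epsilon> n + \<rho> a ^ n \<le> (c a - u wl) / (c astar - u wl)) \<and>
    (\<forall>a\<in>A. c astar < c a \<longrightarrow> \<epsilon> n * (u (w\<^sub>0 + 1) - u wl) \<le> c a - c astar)"
    by (intro eventually_binary_contract_conditions) auto
  hence "\<forall>\<^sub>F n in sequentially. \<exists>w. contract_ok wl u c A astar \<mu> n w \<and>
    card (w ` space (iid \<mu> astar n)) = 2 \<and>
    (\<integral>x. w x \<partial>iid \<mu> astar n) \<le> w\<^sub>0 + 2 * (c astar - u wl) / u' (w\<^sub>0 + 1) * \<epsilon> n"
  proof (rule eventually_mono, elim conjE)
    fix n
    assume small: "\<epsilon> n \<le> 1/2" "2 * (c astar - u wl) / u' (w\<^sub>0 + 1) * \<epsilon> n \<le> 1"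
      and below: "\<forall>a\<in>A. c a < c astar \<longrightarrow> \<epsilon> n + \<rho> a ^ n \<le> (c a - u wl) / (c astar - u wl)"
      and above: "\<forall>a\<in>A. c astar < c a \<longrightarrow> \<epsilon> n * (u (w\<^sub>0 + 1) - u wl) \<le> c a - c astar"
    define S where "S = (\<Inter>a\<in>Am. {x \<in> space (iid \<mu> astar n). (\<Prod>i<n. lratio \<mu> astar a (x i)) \<le> exp (\<tau> * n)})"
    note test = lratio_test_set[OF astar_in_A Am exp_gt_zero[of "\<tau> * n"], where n = n, folded S_def]
    show "\<exists>w. contract_ok wl u c A astar \<mu> n w \<and> card (w ` space (iid \<mu> astar n)) = 2 \<and>
      (\<integral>x. w x \<partial>iid \<mu> astar n) \<le> w\<^sub>0 + 2 * (c astar - u wl) / u' (w\<^sub>0 + 1) * \<epsilon> n"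
    proof (rule exists_binary_contract[OF mt test(1) a\<^sub>0 _ small])
      show "1 - measure (iid \<mu> astar n) S \<le> \<epsilon> n"
        using test(2) by (simp add: \<epsilon>_def exp_minus field_simps)
      show "\<epsilon> n + measure (iid \<mu> a n) S \<le> (c a - u wl) / (c astar - u wl)" if "a \<in> A" "c a < c astar" for a
        using below \<rho>[OF that] test(1) that by (fastforce simp: S_def Am_def)
    qed (use above in auto)
  qed
  thus ?thesis using that[of "2 * (c astar - u wl) / u' (w\<^sub>0 + 1) * card Am"] by (simp add: \<epsilon>_def mult.assoc)
qed

theorem eventually_C_bin_less_C_SB:
  fixes \<mu> :: "'a \<Rightarrow> 'x::euclidean_space measure" and X :: "'x set"
    and \<mu>' :: "'a \<Rightarrow> 'y::euclidean_space measure" and X' :: "'y set"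
  assumes mt: "monitoring_tech X A \<mu>" and mt': "monitoring_tech X' A \<mu>'"
    and a': "a' \<in> A" "c a' < c astar"
    and KL_less: "\<And>a. a \<in> A \<Longrightarrow> c a < c astar \<Longrightarrow> KL (\<mu>' a') (\<mu>' astar) < KL (\<mu> a) (\<mu> astar)"
  shows "\<forall>\<^sub>F n in sequentially. C_bin wl u c A astar \<mu> n < C_SB wl u c A astar \<mu>' n"
proof -
  define K where "K a = (\<integral>x. lratio \<mu> astar a x * ln (lratio \<mu> astar a x) \<partial>\<mu> astar)" for a
  define K' where "K' = (\<integral>x. lratio \<mu>' astar a' x * ln (lratio \<mu>' astar a' x) \<partial>\<mu>' astar)"
  have "finite {a \<in> A. c a < c astar}" "{a \<in> A. c a < c astar} \<noteq> {}" using finite_A a' by auto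
  moreover have "0 \<le> K'" unfolding K'_def
    by (rule likelihood_ratio.integral_mult_ln_nonneg[OF monitoring.likelihood_ratio[OF monitoring.intro[OF mt']
          astar_in_A a'(1)]])
  moreover have "K' < K a" if "a \<in> {a \<in> A. c a < c astar}" for a
    using that KL_less monitoring.KL_eq_integral[OF monitoring.intro[OF mt] astar_in_A]
      monitoring.KL_eq_integral[OF monitoring.intro[OF mt'] astar_in_A a'(1)]
    by (simp add: K_def K'_def)
  ultimately obtain s \<tau> where "K' < s" "s < \<tau>" "0 < \<tau>" and \<tau>: "\<forall>a\<in>{a \<in> A. c a < c astar}. \<tau> < K a"
    using exists_separating_rates by blast
  obtain D C where "0 < D" "0 < C" and lower: "\<forall>\<^sub>F n in sequentially. \<forall>w. contract_ok wl u c A astar \<mu>' n w \<longrightarrow>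
      w\<^sub>0 + min D (C * exp (- s * n)) \<le> (\<integral>x. w x \<partial>iid \<mu>' astar n)"
    using eventually_cost_lower_bound[OF mt' a'] \<open>K' < s\<close> unfolding K'_def by blast
  obtain C\<^sub>1 where upper: "\<forall>\<^sub>F n in sequentially. \<exists>w. contract_ok wl u c A astar \<mu> n w \<and>
      card (w ` space (iid \<mu> astar n)) = 2 \<and> (\<integral>x. w x \<partial>iid \<mu> astar n) \<le> w\<^sub>0 + C\<^sub>1 * exp (- \<tau> * n)"
    using eventually_binary_contract[OF mt a' \<open>0 < \<tau>\<close>] \<tau> unfolding K_def by auto
  from upper lower eventually_exp_less_min[OF \<open>0 < D\<close> \<open>0 < C\<close> \<open>s < \<tau>\<close> \<open>0 < \<tau>\<close>, of C\<^sub>1]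
  show ?thesis
  proof eventually_elim
    case (elim n)
    then obtain w where w: "contract_ok wl u c A astar \<mu> n w" "card (w ` space (iid \<mu> astar n)) = 2"
      "(\<integral>x. w x \<partial>iid \<mu> astar n) \<le> w\<^sub>0 + C\<^sub>1 * exp (- \<tau> * n)" by blast
    have "C_bin wl u c A astar \<mu> n \<le> ereal (\<integral>x. w x \<partial>iid \<mu> astar n)" using w(1,2) by (rule C_bin_le_cost)
    also have "\<dots> < ereal (w\<^sub>0 + min D (C * exp (- s * n)))" using w(3) elim(3) by (simp add: min_def)
    also have "\<dots> \<le> C_SB wl u c A astar \<mu>' n" using elim(2) by (intro le_C_SB) blast
    finally show ?case .
  qed
qed

end

lemma standing_assms_principal_agent:
  assumes "standing_assms wl u c A astar" "finite A" "astar \<in> A" "a\<^sub>0 \<in> A" "c a\<^sub>0 < c astar"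
  obtains u' u'' w\<^sub>0 where "principal_agent wl u u' u'' c A astar w\<^sub>0"
proof -
  obtain u' u'' where
    d: "\<And>w. wl \<le> w \<Longrightarrow> (u has_real_derivative u' w) (at w within {wl..}) \<and>
         (u' has_real_derivative u'' w) (at w within {wl..}) \<and> 0 < u' w \<and> u'' w < 0"
    and "continuous_on {wl..} u''"
    using assms(1) unfolding standing_assms_def by blast
  then interpret utility wl u u' u'' by unfold_locales simp_all
  have "c ` A \<subseteq> interior (u ` {wl..})" using assms(1) by (simp add: standing_assms_def)
  hence c_int: "c a \<in> interior (u ` {wl..})" if "a \<in> A" for a using that by blast
  have u_wl_less_c: "u wl < c a" if a: "a \<in> A" for a
  proof -
    obtain e where "0 < e" "c a - e \<in> u ` {wl..}" by (rule interior_real_nbhd[OF c_int[OF a]])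
    then obtain y where "wl \<le> y" "c a - e = u y" by auto
    thus ?thesis using u_mono[of wl y] \<open>0 < e\<close> by simp
  qed
  obtain w\<^sub>0 where "wl \<le> w\<^sub>0" "u w\<^sub>0 = c astar"
  proof -
    obtain e where "0 < e" "c astar + e \<in> u ` {wl..}" by (rule interior_real_nbhd[OF c_int[OF assms(3)]])
    then obtain y where "wl \<le> y" "c astar + e = u y" by auto
    moreover have "u wl \<le> c astar" using u_wl_less_c[OF assms(3)] by simp
    ultimately have "\<exists>x. wl \<le> x \<and> x \<le> y \<and> u x = c astar"
      using continuous_on_subset[OF continuous_on_u, of "{wl..y}"] \<open>0 < e\<close> by (intro IVT') auto
    thus ?thesis using that by blast
  qed
  moreover have "w\<^sub>0 \<noteq> wl" using \<open>u w\<^sub>0 = c astar\<close> u_wl_less_c[OF assms(3)] by auto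
  ultimately have "principal_agent wl u u' u'' c A astar w\<^sub>0"
  proof (intro principal_agent.intro principal_agent_axioms.intro)
    show "wl < w\<^sub>0" using \<open>wl \<le> w\<^sub>0\<close> \<open>w\<^sub>0 \<noteq> wl\<close> by simp
    show "c a \<noteq> c astar" if "a \<in> A" "a \<noteq> astar" for a
      using assms(1) that by (simp add: standing_assms_def)
  qed (use utility_axioms assms(2,3) \<open>u w\<^sub>0 = c astar\<close> u_wl_less_c in simp_all)
  thus ?thesis by (rule that)
qed

theorem corollary1:
  fixes A :: "'a set" and astar :: 'a and Am :: "'a set"
    and X :: "'x::euclidean_space set" and \<mu> :: "'a \<Rightarrow> 'x measure"
    and X' :: "'y::euclidean_space set" and \<mu>' :: "'a \<Rightarrow> 'y measure"
  assumes "finite A" and "astar \<in> A" and "Am \<noteq> {}" and "Am \<subset> A"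
    and "monitoring_tech X A \<mu>" and "monitoring_tech X' A \<mu>'"
    and "(MIN a\<in>Am. KL (\<mu> a) (\<mu> astar)) > (MIN a\<in>Am. KL (\<mu>' a) (\<mu>' astar))"
  shows "\<forall>wl u c. standing_assms wl u c A astar \<and> Aminus c A astar = Am \<longrightarrow>
           (\<exists>N. \<forall>n\<ge>N. C_SB wl u c A astar \<mu> n \<le> C_bin wl u c A astar \<mu> n \<and>
                       C_bin wl u c A astar \<mu> n < C_SB wl u c A astar \<mu>' n)"
proof (intro allI impI)
  fix wl u and c :: "'a \<Rightarrow> real"
  assume H: "standing_assms wl u c A astar \<and> Aminus c A astar = Am"
  hence Am: "Am = {a \<in> A. c a < c astar}" by (simp add: Aminus_def)
  have "finite Am" using assms(1,4) finite_subset by blast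
  then obtain a' where a': "a' \<in> Am" "\<And>a. a \<in> Am \<Longrightarrow> KL (\<mu>' a') (\<mu>' astar) < KL (\<mu> a) (\<mu> astar)"
    using obtain_MIN_less[OF _ assms(3,7)] by blast
  obtain u' u'' w\<^sub>0 where "principal_agent wl u u' u'' c A astar w\<^sub>0"
    using standing_assms_principal_agent[of wl u c A astar a'] H assms(1,2) a'(1) Am by blast
  hence "\<forall>\<^sub>F n in sequentially. C_bin wl u c A astar \<mu> n < C_SB wl u c A astar \<mu>' n"
    using a' by (intro principal_agent.eventually_C_bin_less_C_SB[OF _ assms(5,6), of _ _ _ _ _ _ _ a'])
      (auto simp: Am)
  thus "\<exists>N. \<forall>n\<ge>N. C_SB wl u c A astar \<mu> n \<le> C_bin wl u c A astar \<mu> n \<and>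
                       C_bin wl u c A astar \<mu> n < C_SB wl u c A astar \<mu>' n"
    unfolding eventually_sequentially by (simp add: C_SB_le_C_bin)
qed

end
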